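(* Let $d\geq 2$. Then $\mathcal{P}(z,\lambda)$, regarded as a function of both $z$ and $\lambda$, is irreducible: there are no $f_1,f_2$, each a Laurent polynomial in $z$ with coefficients polynomial in $\lambda$, neither of the form $Cz^a$ with $C\neq 0$ a constant and $a\in\mathbb{Z}^d$, such that $\mathcal{P}=f_1f_2$.
   Context: Fix positive integers $q_1,\dots,q_d$ with greatest common divisor $1$, $Q=q_1\cdots q_d$, $\Gamma=q_1\mathbb{Z}\oplus\cdots\oplus q_d\mathbb{Z}$, and a $\Gamma$-periodic $V:\mathbb{Z}^d\to\mathbb{C}$. The discrete Laplacian is $(\Delta u)(n)=\sum_{\|n'-n\|_1=1}u(n')$. Let $W=\{n\in\mathbb{Z}^d:0\le n_j\le q_j-1\}$. For $z\in(\mathbb{C}\setminus\{0\})^d$, the space of $u:\mathbb{Z}^d\to\mathbb{C}$ with $u(n+q_je_j)=z_ju(n)$ for all $j,n$ is identified with $\mathbb{C}^W$ by restriction; $\mathcal{D}(z)$ is the $Q\times Q$ matrix of $-\Delta+V$ on this space and $\mathcal{P}(z,\lambda)=\det(\mathcal{D}(z)-\lambda I)$. Here $z^a=z_1^{a_1}\cdots z_d^{a_d}$. *)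

theory Defs
  imports "HOL-Analysis.Analysis" "HOL-Combinatorics.Permutations"
begin

text \<open>Lattice points of Z^d are functions 'd => int, 'd a finite index type with CARD('d) = d.
  The period vector is q :: 'd => nat.\<close>

definition zpow :: "('d::finite \<Rightarrow> complex) \<Rightarrow> ('d \<Rightarrow> int) \<Rightarrow> complex" where
  "zpow z a = (\<Prod>j\<in>UNIV. z j powi a j)"

definition Wdom :: "('d::finite \<Rightarrow> nat) \<Rightarrow> ('d \<Rightarrow> int) set" where
  "Wdom q = {n. \<forall>j. 0 \<le> n j \<and> n j < int (q j)}"

definition red :: "('d::finite \<Rightarrow> nat) \<Rightarrow> ('d \<Rightarrow> int) \<Rightarrow> ('d \<Rightarrow> int)" where
  "red q n = (\<lambda>j. n j mod int (q j))"

definition quo :: "('d::finite \<Rightarrow> nat) \<Rightarrow> ('d \<Rightarrow> int) \<Rightarrow> ('d \<Rightarrow> int)" where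
  "quo q n = (\<lambda>j. n j div int (q j))"

definition neighbors :: "('d::finite \<Rightarrow> int) \<Rightarrow> ('d \<Rightarrow> int) set" where
  "neighbors n = {n'. (\<Sum>j\<in>UNIV. \<bar>n' j - n j\<bar>) = 1}"

text \<open>Matrix of -Delta + V on the Floquet space {u. u(n + q_j e_j) = z_j u(n)}, identified with C^W:
  a function u with this property satisfies u n = z^(quo q n) * u (red q n).\<close>
definition Dmat :: "('d::finite \<Rightarrow> nat) \<Rightarrow> (('d \<Rightarrow> int) \<Rightarrow> complex) \<Rightarrow> ('d \<Rightarrow> complex)
    \<Rightarrow> ('d \<Rightarrow> int) \<Rightarrow> ('d \<Rightarrow> int) \<Rightarrow> complex" where
  "Dmat q V z w w' =
     (if w = w' then V w else 0)
     - (\<Sum>n'\<in>neighbors w. if red q n' = w' then zpow z (quo q n') else 0)"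

definition detS :: "'i set \<Rightarrow> ('i \<Rightarrow> 'i \<Rightarrow> complex) \<Rightarrow> complex" where
  "detS S M = (\<Sum>p\<in>{p. p permutes S}. of_int (sign p) * (\<Prod>i\<in>S. M i (p i)))"

definition charP :: "('d::finite \<Rightarrow> nat) \<Rightarrow> (('d \<Rightarrow> int) \<Rightarrow> complex) \<Rightarrow> ('d \<Rightarrow> complex)
    \<Rightarrow> complex \<Rightarrow> complex" where
  "charP q V z lam = detS (Wdom q) (\<lambda>w w'. Dmat q V z w w' - (if w = w' then lam else 0))"

text \<open>A Laurent polynomial in z with coefficients polynomial in lambda is given by a finitely
  supported coefficient function c :: ('d => int) * nat => complex, c(a,k) being the coefficient
  of z^a lambda^k.\<close>
definition lp_eval :: "(('d::finite \<Rightarrow> int) \<times> nat \<Rightarrow> complex) \<Rightarrow> ('d \<Rightarrow> complex) \<Rightarrow> complex \<Rightarrow> complex" where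
  "lp_eval c z lam = (\<Sum>x\<in>{x. c x \<noteq> 0}. c x * zpow z (fst x) * lam ^ snd x)"

definition is_lp :: "(('d::finite \<Rightarrow> int) \<times> nat \<Rightarrow> complex) \<Rightarrow> bool" where
  "is_lp c \<longleftrightarrow> finite {x. c x \<noteq> 0}"

definition is_monomial :: "(('d::finite \<Rightarrow> int) \<times> nat \<Rightarrow> complex) \<Rightarrow> bool" where
  "is_monomial c \<longleftrightarrow> (\<exists>C a. C \<noteq> 0 \<and> c = (\<lambda>x. if x = (a, 0) then C else 0))"

end

theory Submission
  imports Defs "Jordan_Normal_Form.Determinant" "HOL-Library.Function_Algebras"
begin

text \<open>Suppose \<open>\<P> = f\<^sub>1 f\<^sub>2\<close>. Along the curves \<open>z\<^sub>j = t\<^bsup>w\<^sub>j\<^esup> x\<^sub>j\<close>, \<open>\<lambda> = t\<^sup>L \<mu>\<close>, \<open>t \<rightarrow> \<infinity>\<close>, each factor is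
  dominated by its top part for the weight \<open>(w, L)\<close>, and the top part of \<open>\<P>\<close> is the product of those of
  \<open>f\<^sub>1\<close> and \<open>f\<^sub>2\<close>. For a generic \<open>w\<close> and \<open>L\<close> large the top part of \<open>\<P>\<close> is \<open>(-\<lambda>)\<^sup>Q\<close>; comparing with \<open>w\<close> and
  \<open>-w\<close> shows that the highest \<open>\<lambda>\<close>-coefficients of the factors are monomials \<open>c z\<^sup>b\<close>, of degrees \<open>k\<^sub>1 + k\<^sub>2 = Q\<close>.

  For the weight \<open>w = q\<close>, \<open>L = 1\<close> the top part of \<open>\<P>\<close> is \<open>det (A(x) - \<lambda>)\<close>, where \<open>A\<close> keeps only the hops
  \<open>n \<rightarrow> n + e\<^sub>j\<close>. Floquet waves \<open>\<Omega>\<^sup>n\<close> with \<open>\<Omega>\<^sub>j\<^bsup>q\<^sub>j\<^esup> = x\<^sub>j\<close> are its eigenvectors, so its eigenvalues are the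
  \<open>Q\<close> numbers \<open>-\<Sum>\<^sub>j \<Omega>\<^sub>j\<close>, one for each choice of roots \<open>\<zeta> \<in> W\<close>, distinct for suitable \<open>|x|\<close>. The top parts
  of \<open>f\<^sub>1\<close> and \<open>f\<^sub>2\<close> share them out, \<open>k\<^sub>1\<close> and \<open>k\<^sub>2\<close> at a time. Turning \<open>x\<^sub>j\<close> once around \<open>0\<close> shifts \<open>\<zeta>\<^sub>j\<close>
  cyclically, and by continuity the eigenvalues belonging to \<open>f\<^sub>1\<close> are permuted among themselves; as
  these shifts act transitively on \<open>W\<close>, one of \<open>k\<^sub>1, k\<^sub>2\<close> vanishes, and that factor is a monomial.\<close>

section \<open>Determinants over finite index sets\<close>

lemma bij_betw_map_permutation_permutes:
  assumes bh: "bij_betw h {0..<n} S"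
  shows "bij_betw (map_permutation {0..<n} h) {p. p permutes {0..<n}} {p. p permutes S}"
proof -
  define h' where "h' = inv_into {0..<n} h"
  have bh': "bij_betw h' S {0..<n}" unfolding h'_def using bh by (rule bij_betw_inv_into)
  have hh': "\<And>x. x \<in> S \<Longrightarrow> h (h' x) = x" unfolding h'_def using bh
    by (meson bij_betw_inv_into_right)
  have h'h: "\<And>x. x \<in> {0..<n} \<Longrightarrow> h' (h x) = x" unfolding h'_def using bh
    by (meson bij_betw_inv_into_left)
  show ?thesis
  proof (rule bij_betw_byWitness[where f' = "map_permutation S h'"])
    show "\<forall>a\<in>{p. p permutes {0..<n}}. map_permutation S h' (map_permutation {0..<n} h a) = a"
      using map_permutation_compose_inv[OF bh _ h'h] by auto
    show "\<forall>a'\<in>{p. p permutes S}. map_permutation {0..<n} h (map_permutation S h' a') = a'"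
      using map_permutation_compose_inv[OF bh' _ hh'] by auto
    show "map_permutation {0..<n} h ` {p. p permutes {0..<n}} \<subseteq> {p. p permutes S}"
      using map_permutation_permutes[OF bh] by auto
    show "map_permutation S h' ` {p. p permutes S} \<subseteq> {p. p permutes {0..<n}}"
      using map_permutation_permutes[OF bh'] by auto
  qed
qed

lemma detS_eq_det_mat:
  assumes bh: "bij_betw h {0..<n} S"
  shows "detS S M = det (mat n n (\<lambda>(i,j). M (h i) (h j)))"
proof -
  have inj: "inj_on h {0..<n}" using bh bij_betw_def by blast
  have fin: "finite {0..<n::nat}" by simp
  have "det (mat n n (\<lambda>(i,j). M (h i) (h j))) =
     (\<Sum>p\<in>{p. p permutes {0..<n}}. of_int (sign p) * (\<Prod>i=0..<n. M (h i) (h (p i))))"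
    by (subst det_def'[of _ n]) (auto intro!: sum.cong prod.cong simp: permutes_in_image)
  also have "\<dots> = (\<Sum>p\<in>{p. p permutes {0..<n}}. of_int (sign (map_permutation {0..<n} h p)) *
          (\<Prod>i\<in>S. M i (map_permutation {0..<n} h p i)))"
  proof (rule sum.cong[OF refl])
    fix p assume "p \<in> {p. p permutes {0..<n}}"
    hence p: "p permutes {0..<n}" by simp
    have "(\<Prod>i\<in>S. M i (map_permutation {0..<n} h p i)) =
          (\<Prod>i\<in>{0..<n}. M (h i) (map_permutation {0..<n} h p (h i)))"
      using prod.reindex_bij_betw[OF bh, of "\<lambda>i. M i (map_permutation {0..<n} h p i)"] by simp
    also have "\<dots> = (\<Prod>i=0..<n. M (h i) (h (p i)))"
      by (rule prod.cong[OF refl]) (simp add: map_permutation_apply[OF inj])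
    finally show "of_int (sign p) * (\<Prod>i=0..<n. M (h i) (h (p i))) =
       of_int (sign (map_permutation {0..<n} h p)) * (\<Prod>i\<in>S. M i (map_permutation {0..<n} h p i))"
      using sign_map_permutation[OF inj p fin] by simp
  qed
  also have "\<dots> = detS S M" unfolding detS_def
    by (rule sum.reindex_bij_betw[OF bij_betw_map_permutation_permutes[OF bh], of "\<lambda>p. of_int (sign p) * (\<Prod>i\<in>S. M i (p i))"])
  finally show ?thesis by simp
qed

lemma detS_eq_0_if_kernel:
  assumes fin: "finite S" and i0: "i0 \<in> S" and v0: "v i0 \<noteq> 0"
    and ker: "\<forall>i\<in>S. (\<Sum>j\<in>S. M i j * v j) = 0"
  shows "detS S M = 0"
proof -
  define n where "n = card S"
  obtain h where bh: "bij_betw h {0..<n} S" unfolding n_def using ex_bij_betw_nat_finite[OF fin] by blast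
  define B where "B = mat n n (\<lambda>(i,j). M (h i) (h j))"
  define u where "u = vec n (\<lambda>j. v (h j))"
  have B: "B \<in> carrier_mat n n" unfolding B_def by simp
  obtain k where k: "k < n" "h k = i0" using bh i0 unfolding bij_betw_def by force
  have u0: "u \<noteq> 0\<^sub>v n"
  proof
    assume "u = 0\<^sub>v n"
    hence "u $ k = 0" using k by simp
    thus False using k v0 unfolding u_def by simp
  qed
  have Bu: "B *\<^sub>v u = 0\<^sub>v n"
  proof (rule eq_vecI)
    show "dim_vec (B *\<^sub>v u) = dim_vec (0\<^sub>v n)" using B by simp
    fix i assume "i < dim_vec (0\<^sub>v n)"
    hence i: "i < n" by simp
    have "(B *\<^sub>v u) $ i = (\<Sum>j=0..<n. M (h i) (h j) * v (h j))"
      using i unfolding B_def u_def by (simp add: scalar_prod_def)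
    also have "\<dots> = (\<Sum>j\<in>S. M (h i) j * v j)"
      using sum.reindex_bij_betw[OF bh, of "\<lambda>j. M (h i) j * v j"] by simp
    also have "\<dots> = 0" using ker i bh unfolding bij_betw_def by auto
    finally show "(B *\<^sub>v u) $ i = 0\<^sub>v n $ i" using i by simp
  qed
  have uc: "u \<in> carrier_vec n" unfolding u_def by simp
  have "det B = 0" using det_0_iff_vec_prod_zero[OF B] u0 Bu uc by blast
  thus ?thesis using detS_eq_det_mat[OF bh] unfolding B_def by simp
qed

lemma detS_conj_diagonal:
  assumes fin: "finite S" and g: "\<forall>i\<in>S. g i \<noteq> (0::complex)"
  shows "detS S (\<lambda>i j. g i * M i j / g j) = detS S M"
  unfolding detS_def
proof (rule sum.cong[OF refl])
  fix p assume "p \<in> {p. p permutes S}"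
  hence p: "p permutes S" by simp
  have pg: "(\<Prod>i\<in>S. g (p i)) = (\<Prod>i\<in>S. g i)"
    using prod.permute[OF p, of g] by (simp add: o_def)
  have nz: "(\<Prod>i\<in>S. g i) \<noteq> 0" using g fin by simp
  have "(\<Prod>i\<in>S. g i * M i (p i) / g (p i)) = (\<Prod>i\<in>S. g i) * (\<Prod>i\<in>S. M i (p i)) / (\<Prod>i\<in>S. g (p i))"
    by (simp add: prod.distrib prod_dividef)
  also have "\<dots> = (\<Prod>i\<in>S. M i (p i))" using pg nz by simp
  finally show "of_int (sign p) * (\<Prod>i\<in>S. g i * M i (p i) / g (p i)) = of_int (sign p) * (\<Prod>i\<in>S. M i (p i))"
    by simp
qed

lemma detS_divide:
  "detS S (\<lambda>i j. M i j / c) = detS S M / c ^ card S"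
  unfolding detS_def
  by (simp add: sum_divide_distrib prod_dividef)

lemma tendsto_detS:
  assumes "\<And>i j. i \<in> S \<Longrightarrow> j \<in> S \<Longrightarrow> ((\<lambda>t. M t i j) \<longlongrightarrow> L i j) F"
  shows "((\<lambda>t. detS S (M t)) \<longlongrightarrow> detS S L) F"
  unfolding detS_def
proof (intro tendsto_sum tendsto_mult tendsto_const tendsto_prod)
  fix p i assume "p \<in> {p. p permutes S}" "i \<in> S"
  thus "((\<lambda>t. M t i (p i)) \<longlongrightarrow> L i (p i)) F" using assms permutes_in_image by fastforce
qed

lemma detS_diagonal:
  assumes fin: "finite S"
  shows "detS S (\<lambda>i j. if i = j then c i else 0) = (\<Prod>i\<in>S. c i)"
proof -
  have z: "(\<Prod>i\<in>S. (if i = p i then c i else 0)) = 0" if "p permutes S" "p \<noteq> id" for p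
  proof -
    obtain i where "p i \<noteq> i" using \<open>p \<noteq> id\<close> by (auto simp: fun_eq_iff)
    hence "i \<in> S" using that(1) permutes_not_in by metis
    thus ?thesis using fin \<open>p i \<noteq> i\<close> by (intro prod_zero[OF fin] bexI[of _ i]) auto
  qed
  have "detS S (\<lambda>i j. if i = j then c i else 0) =
     (\<Sum>p\<in>{p. p permutes S}. if p = id then (\<Prod>i\<in>S. c i) else 0)"
    unfolding detS_def
    by (rule sum.cong[OF refl]) (auto simp: z)
  also have "\<dots> = (\<Prod>i\<in>S. c i)"
    using fin by (simp add: permutes_id finite_permutations)
  finally show ?thesis .
qed

section \<open>Laurent polynomials along monomial curves\<close>

definition lp_supp :: "('a \<Rightarrow> complex) \<Rightarrow> 'a set" where "lp_supp f = {x. f x \<noteq> 0}"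

definition wdot :: "('d::finite \<Rightarrow> int) \<Rightarrow> ('d \<Rightarrow> int) \<Rightarrow> int" where
  "wdot w a = (\<Sum>j\<in>UNIV. w j * a j)"

definition weight :: "('d::finite \<Rightarrow> int) \<Rightarrow> int \<Rightarrow> ('d \<Rightarrow> int) \<times> nat \<Rightarrow> int" where
  "weight w L s = wdot w (fst s) + L * int (snd s)"

definition top_weight :: "(('d::finite \<Rightarrow> int) \<times> nat \<Rightarrow> complex) \<Rightarrow> ('d \<Rightarrow> int) \<Rightarrow> int \<Rightarrow> int" where
  "top_weight f w L = Max (weight w L ` lp_supp f)"

definition top_part :: "(('d::finite \<Rightarrow> int) \<times> nat \<Rightarrow> complex) \<Rightarrow> ('d \<Rightarrow> int) \<Rightarrow> int \<Rightarrow> ('d \<Rightarrow> int) \<times> nat \<Rightarrow> complex" where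
  "top_part f w L = (\<lambda>s. if weight w L s = top_weight f w L then f s else 0)"

text \<open>Along \<open>z\<^sub>j = t\<^bsup>w\<^sub>j\<^esup> x\<^sub>j\<close>, \<open>\<lambda> = t\<^sup>L \<mu>\<close> the monomial \<open>z\<^sup>a \<lambda>\<^sup>k\<close> grows like \<open>t\<^bsup>weight w L (a, k)\<^esup>\<close>, so for
  \<open>t \<rightarrow> \<infinity>\<close> only the top part survives.\<close>
definition zcurve :: "('d::finite \<Rightarrow> int) \<Rightarrow> ('d \<Rightarrow> complex) \<Rightarrow> real \<Rightarrow> 'd \<Rightarrow> complex" where
  "zcurve w x t = (\<lambda>j. complex_of_real t powi w j * x j)"

definition lcurve :: "int \<Rightarrow> complex \<Rightarrow> real \<Rightarrow> complex" where
  "lcurve L \<mu> t = complex_of_real t powi L * \<mu>"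

lemma lp_eval_superset:
  assumes "finite S" "lp_supp c \<subseteq> S"
  shows "lp_eval c z lam = (\<Sum>s\<in>S. c s * zpow z (fst s) * lam ^ snd s)"
  unfolding lp_eval_def
  by (rule sum.mono_neutral_left) (use assms in \<open>auto simp: lp_supp_def\<close>)

lemma lp_eval_empty_supp:
  assumes "lp_supp f = {}" shows "lp_eval f z lam = 0"
  using assms unfolding lp_eval_def lp_supp_def by (simp only: sum.empty)

lemma lp_eval_singleton:
  assumes "lp_supp c = {s0}"
  shows "lp_eval c x \<mu> = c s0 * zpow x (fst s0) * \<mu> ^ snd s0"
  using lp_eval_superset[of "{s0}" c x \<mu>] assms by simp

lemma zpow_one: "zpow (\<lambda>_. 1) a = 1"
  unfolding zpow_def by simp

lemma zpow_nonzero: "\<forall>j. x j \<noteq> 0 \<Longrightarrow> zpow x a \<noteq> 0"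
  unfolding zpow_def by simp

lemma prod_power_int_same_base:
  fixes t :: "'a::field"
  assumes "t \<noteq> 0" "finite A"
  shows "(\<Prod>j\<in>A. t powi e j) = t powi (\<Sum>j\<in>A. e j)"
  using assms(2) by (induction A rule: finite_induct) (auto simp: power_int_add assms(1))

lemma zpow_zcurve:
  assumes "t \<noteq> 0"
  shows "zpow (zcurve w x t) a = complex_of_real t powi wdot w a * zpow x a"
proof -
  have "zpow (zcurve w x t) a = (\<Prod>j\<in>UNIV. complex_of_real t powi (w j * a j) * x j powi a j)"
    unfolding zpow_def zcurve_def
    by (rule prod.cong[OF refl]) (simp add: power_int_mult_distrib power_int_mult)
  also have "\<dots> = (\<Prod>j\<in>UNIV. complex_of_real t powi (w j * a j)) * zpow x a"
    by (simp add: prod.distrib zpow_def)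
  also have "\<dots> = complex_of_real t powi wdot w a * zpow x a"
    using prod_power_int_same_base[of "complex_of_real t" UNIV "\<lambda>j. w j * a j"] assms by (simp add: wdot_def)
  finally show ?thesis .
qed

lemma lcurve_power:
  "lcurve L \<mu> t ^ k = complex_of_real t powi (L * int k) * \<mu> ^ k"
  unfolding lcurve_def power_mult_distrib by (simp add: power_int_mult)

lemma lp_eval_curves:
  assumes "t \<noteq> 0" "is_lp c"
  shows "lp_eval c (zcurve w x t) (lcurve L \<mu> t) =
     (\<Sum>s\<in>lp_supp c. c s * zpow x (fst s) * \<mu> ^ snd s * complex_of_real t powi weight w L s)"
  unfolding lp_eval_def lp_supp_def
proof (rule sum.cong[OF refl])
  fix s
  show "c s * zpow (zcurve w x t) (fst s) * lcurve L \<mu> t ^ snd s =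
         c s * zpow x (fst s) * \<mu> ^ snd s * complex_of_real t powi weight w L s"
    using assms(1) by (simp add: zpow_zcurve lcurve_power weight_def power_int_add)
qed

lemma tendsto_power_int_neg:
  assumes "n < 0"
  shows "((\<lambda>t::real. t powi n) \<longlongrightarrow> 0) at_top"
proof -
  have "((\<lambda>t::real. inverse t ^ nat (-n)) \<longlongrightarrow> 0 ^ nat (-n)) at_top"
    by (intro tendsto_intros tendsto_inverse_0_at_top filterlim_ident)
  moreover have "(0::real) ^ nat (-n) = 0" using assms by simp
  ultimately show ?thesis using assms by (simp add: power_int_def)
qed

lemma tendsto_of_real_power_int_neg:
  assumes "n < 0"
  shows "((\<lambda>t::real. complex_of_real t powi n) \<longlongrightarrow> 0) at_top"
  using tendsto_of_real[OF tendsto_power_int_neg[OF assms], where 'a=complex] by (simp add: of_real_power_int)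

lemma tendsto_mult_power_int_nonpos:
  assumes "n \<le> 0"
  shows "((\<lambda>t::real. c * complex_of_real t powi n) \<longlongrightarrow> (if n = 0 then c else 0)) at_top"
proof (cases "n = 0")
  case True thus ?thesis by simp
next
  case False
  hence "n < 0" using assms by simp
  from tendsto_mult[OF tendsto_const tendsto_of_real_power_int_neg[OF this], of c] False show ?thesis by simp
qed

lemma power_int_growth_le:
  fixes f :: "real \<Rightarrow> complex"
  assumes fa: "((\<lambda>t. f t / complex_of_real t powi a) \<longlongrightarrow> c) at_top"
    and fb: "((\<lambda>t. f t / complex_of_real t powi b) \<longlongrightarrow> d) at_top" and c: "c \<noteq> 0"
  shows "a \<le> b"
proof (rule ccontr)
  assume "\<not> a \<le> b"
  hence "((\<lambda>t. f t / complex_of_real t powi b * complex_of_real t powi (b - a)) \<longlongrightarrow> d * 0) at_top"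
    by (intro tendsto_mult fb tendsto_of_real_power_int_neg) simp
  moreover have "eventually (\<lambda>t. f t / complex_of_real t powi b * complex_of_real t powi (b - a) =
      f t / complex_of_real t powi a) at_top"
    by (rule eventually_mono[OF eventually_gt_at_top[of 0]]) (simp add: power_int_diff)
  ultimately have "((\<lambda>t. f t / complex_of_real t powi a) \<longlongrightarrow> 0) at_top"
    using Lim_transform_eventually by fastforce
  thus False using tendsto_unique[OF trivial_limit_at_top_linorder fa] c by blast
qed

lemma lp_supp_top_part: "lp_supp (top_part f w L) \<subseteq> lp_supp f"
  unfolding lp_supp_def top_part_def by auto

lemma is_lp_top_part: "is_lp f \<Longrightarrow> is_lp (top_part f w L)"
  using lp_supp_top_part[of f w L] unfolding is_lp_def lp_supp_def by (auto intro: finite_subset)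

lemma weight_le_top_weight:
  assumes "is_lp f" "s \<in> lp_supp f"
  shows "weight w L s \<le> top_weight f w L"
  unfolding top_weight_def using assms unfolding is_lp_def lp_supp_def by (intro Max_ge) auto

lemma top_part_nonempty:
  assumes "is_lp f" "lp_supp f \<noteq> {}"
  shows "lp_supp (top_part f w L) \<noteq> {}"
proof -
  have fin: "finite (lp_supp f)" using assms unfolding is_lp_def lp_supp_def by simp
  have "top_weight f w L \<in> weight w L ` lp_supp f" unfolding top_weight_def using fin assms(2) by (intro Max_in) auto
  then obtain s where "s \<in> lp_supp f" "weight w L s = top_weight f w L" by auto
  hence "s \<in> lp_supp (top_part f w L)" unfolding lp_supp_def top_part_def by simp
  thus ?thesis by blast
qed

lemma tendsto_top_part:
  assumes lp: "is_lp c" and ne: "lp_supp c \<noteq> {}"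
  shows "((\<lambda>t. lp_eval c (zcurve w x t) (lcurve L \<mu> t) / complex_of_real t powi top_weight c w L)
          \<longlongrightarrow> lp_eval (top_part c w L) x \<mu>) at_top"
proof -
  have fin: "finite (lp_supp c)" using lp unfolding is_lp_def lp_supp_def .
  define E where "E = top_weight c w L"
  have le: "weight w L s \<le> E" if "s \<in> lp_supp c" for s
    unfolding E_def top_weight_def using fin that by (intro Max_ge) auto
  have eq: "lp_eval c (zcurve w x t) (lcurve L \<mu> t) / complex_of_real t powi E =
     (\<Sum>s\<in>lp_supp c. c s * zpow x (fst s) * \<mu> ^ snd s * complex_of_real t powi (weight w L s - E))"
    if "t > 0" for t
  proof -
    have "lp_eval c (zcurve w x t) (lcurve L \<mu> t) / complex_of_real t powi E =
      (\<Sum>s\<in>lp_supp c. c s * zpow x (fst s) * \<mu> ^ snd s * complex_of_real t powi weight w L s / complex_of_real t powi E)"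
      using that by (simp add: lp_eval_curves[OF _ lp] sum_divide_distrib)
    also have "\<dots> = (\<Sum>s\<in>lp_supp c. c s * zpow x (fst s) * \<mu> ^ snd s * complex_of_real t powi (weight w L s - E))"
      using that by (intro sum.cong refl) (simp add: power_int_diff)
    finally show ?thesis .
  qed
  have lim: "((\<lambda>t. \<Sum>s\<in>lp_supp c. c s * zpow x (fst s) * \<mu> ^ snd s * complex_of_real t powi (weight w L s - E))
      \<longlongrightarrow> (\<Sum>s\<in>lp_supp c. if weight w L s = E then c s * zpow x (fst s) * \<mu> ^ snd s else 0)) at_top"
  proof (intro tendsto_sum)
    fix s assume "s \<in> lp_supp c"
    thus "((\<lambda>t. c s * zpow x (fst s) * \<mu> ^ snd s * complex_of_real t powi (weight w L s - E))
       \<longlongrightarrow> (if weight w L s = E then c s * zpow x (fst s) * \<mu> ^ snd s else 0)) at_top"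
      using tendsto_mult_power_int_nonpos[of "weight w L s - E"] le by simp
  qed
  have "(\<Sum>s\<in>lp_supp c. if weight w L s = E then c s * zpow x (fst s) * \<mu> ^ snd s else 0) =
        lp_eval (top_part c w L) x \<mu>"
    by (subst lp_eval_superset[OF fin lp_supp_top_part]) (auto simp: top_part_def E_def intro!: sum.cong)
  with lim have "((\<lambda>t. \<Sum>s\<in>lp_supp c. c s * zpow x (fst s) * \<mu> ^ snd s * complex_of_real t powi (weight w L s - E))
      \<longlongrightarrow> lp_eval (top_part c w L) x \<mu>) at_top" by simp
  thus ?thesis unfolding E_def[symmetric]
    by (rule Lim_transform_eventually) (rule eventually_mono[OF eventually_gt_at_top[of 0]], simp add: eq)
qed

lemma wdot_diff: "wdot w (a - b) = wdot w a - wdot w b"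
  unfolding wdot_def by (simp add: algebra_simps sum_subtractf)

lemma wdot_neg: "wdot (- w) a = - wdot w a"
  unfolding wdot_def by (simp add: sum_negf)

lemma wdot_bound:
  assumes "\<forall>j. \<bar>u j\<bar> \<le> 1"
  shows "wdot w u \<le> (\<Sum>j\<in>UNIV. \<bar>w j\<bar>)"
  unfolding wdot_def
proof (rule sum_mono)
  fix j
  have "w j * u j \<le> \<bar>w j\<bar> * \<bar>u j\<bar>" by (metis abs_ge_self abs_mult)
  also have "\<dots> \<le> \<bar>w j\<bar> * 1" using assms by (intro mult_left_mono) auto
  finally show "w j * u j \<le> \<bar>w j\<bar>" by simp
qed

lemma top_part_singleton:
  assumes lp: "is_lp f" and ne: "lp_supp f \<noteq> {}" and inj: "inj_on (weight w L) (lp_supp f)"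
  shows "\<exists>s0\<in>lp_supp f. weight w L s0 = top_weight f w L \<and> lp_supp (top_part f w L) = {s0} \<and>
            (\<forall>s\<in>lp_supp f. s \<noteq> s0 \<longrightarrow> weight w L s < top_weight f w L)"
proof -
  have fin: "finite (lp_supp f)" using lp unfolding is_lp_def lp_supp_def .
  have "top_weight f w L \<in> weight w L ` lp_supp f" unfolding top_weight_def using fin ne by (intro Max_in) auto
  then obtain s0 where s0: "s0 \<in> lp_supp f" "weight w L s0 = top_weight f w L" by auto
  have le: "weight w L s \<le> top_weight f w L" if "s \<in> lp_supp f" for s
    unfolding top_weight_def using fin that by (intro Max_ge) auto
  have lt: "weight w L s < top_weight f w L" if "s \<in> lp_supp f" "s \<noteq> s0" for s
  proof -
    have "weight w L s \<noteq> weight w L s0" using inj that s0(1) unfolding inj_on_def by blast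
    thus ?thesis using le[OF that(1)] s0(2) by linarith
  qed
  have "lp_supp (top_part f w L) = {s0}"
    using s0 lt unfolding lp_supp_def top_part_def by force
  thus ?thesis using s0 lt by blast
qed

lemma top_part_leading_lambda:
  assumes lp: "is_lp f" and ne: "lp_supp f \<noteq> {}" and inj: "inj_on (weight w L) (lp_supp f)"
    and M0: "\<forall>s\<in>lp_supp f. \<bar>wdot w (fst s)\<bar> \<le> M0" and L: "L > 2 * M0"
  shows "\<exists>s. s \<in> lp_supp f \<and> lp_supp (top_part f w L) = {s} \<and> weight w L s = top_weight f w L \<and>
            snd s = Max (snd ` lp_supp f) \<and> (\<forall>a. (a, snd s) \<in> lp_supp f \<longrightarrow> wdot w a \<le> wdot w (fst s))"
proof -
  have fin: "finite (lp_supp f)" using lp unfolding is_lp_def lp_supp_def .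
  obtain s0 where s0: "s0 \<in> lp_supp f" "weight w L s0 = top_weight f w L" "lp_supp (top_part f w L) = {s0}"
    using top_part_singleton[OF lp ne inj] by blast
  have le: "weight w L s \<le> top_weight f w L" if "s \<in> lp_supp f" for s
    unfolding top_weight_def using fin that by (intro Max_ge) auto
  define K where "K = Max (snd ` lp_supp f)"
  have "K \<in> snd ` lp_supp f" unfolding K_def using fin ne by (intro Max_in) auto
  then obtain s' where s': "s' \<in> lp_supp f" "snd s' = K" by auto
  have sK: "snd s0 \<le> K" unfolding K_def using fin s0(1) by (intro Max_ge) auto
  have "snd s0 = K"
  proof (rule ccontr)
    assume "snd s0 \<noteq> K"
    hence lt: "int (snd s0) \<le> int K - 1" using sK by simp
    have "L > 0" using L M0 s0(1) by (smt (verit) abs_ge_zero)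
    have "weight w L s0 = wdot w (fst s0) + L * int (snd s0)" unfolding weight_def by simp
    also have "\<dots> \<le> M0 + L * (int K - 1)"
      using M0 s0(1) lt \<open>L > 0\<close> by (intro add_mono) (auto intro: mult_left_mono)
    also have "\<dots> < - M0 + L * int K" using L by (simp add: algebra_simps)
    also have "\<dots> \<le> weight w L s'" unfolding weight_def using M0 s'(1) s'(2) by auto
    finally have "weight w L s0 < weight w L s'" .
    thus False using le[OF s'(1)] s0(2) by simp
  qed
  moreover have "wdot w a \<le> wdot w (fst s0)" if "(a, snd s0) \<in> lp_supp f" for a
    using le[OF that] s0(2) unfolding weight_def by simp
  ultimately show ?thesis using s0 unfolding K_def by blast
qed

section \<open>Separating weights\<close>

lemma int_mult_small_eq_0:
  fixes L m d :: int
  assumes "L * m = d" "\<bar>d\<bar> < L"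
  shows "m = 0"
proof (rule ccontr)
  assume "m \<noteq> 0"
  hence "\<bar>m\<bar> \<ge> 1" by simp
  moreover have "L > 0" using assms(2) by simp
  ultimately have "\<bar>L * m\<bar> \<ge> L" by (simp add: abs_mult)
  thus False using assms by simp
qed

text \<open>Induction on \<open>D\<close>: a new vector \<open>v\<close> with \<open>v\<^sub>j \<noteq> 0\<close> is separated by \<open>M w + e\<^sub>j\<close>, with \<open>M\<close> exceeding all
  \<open>|u\<^sub>j|\<close>, without losing the vectors already separated by \<open>w\<close>.\<close>
lemma separating_weight_exists:
  "finite D \<Longrightarrow> 0 \<notin> D \<Longrightarrow> \<exists>w::'d::finite \<Rightarrow> int. \<forall>v\<in>D. wdot w v \<noteq> 0"
proof (induction D rule: finite_induct)
  case empty thus ?case by simp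
next
  case (insert v D)
  then obtain w where w: "\<forall>u\<in>D. wdot w u \<noteq> 0" by auto
  have "v \<noteq> 0" using insert by auto
  then obtain j where j: "v j \<noteq> 0" by (auto simp: fun_eq_iff)
  define M where "M = 1 + Max ((\<lambda>u. \<bar>u j\<bar>) ` insert v D)"
  have M: "\<bar>u j\<bar> < M" if "u \<in> insert v D" for u
  proof -
    have "\<bar>u j\<bar> \<le> Max ((\<lambda>u. \<bar>u j\<bar>) ` insert v D)" by (rule Max_ge) (use insert(1) that in auto)
    thus ?thesis unfolding M_def by simp
  qed
  define w' where "w' = (\<lambda>i. M * w i + (if i = j then 1 else 0))"
  have wd: "wdot w' u = M * wdot w u + u j" for u
  proof -
    have "(\<Sum>i\<in>UNIV. u i * (if i = j then 1 else 0)) = u j"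
      by (simp add: mult.commute[of "u _"] if_distrib cong: if_cong)
    thus ?thesis unfolding w'_def wdot_def by (simp add: algebra_simps sum.distrib sum_distrib_left)
  qed
  have "wdot w' u \<noteq> 0" if u: "u \<in> insert v D" for u
  proof
    assume "wdot w' u = 0"
    hence "M * wdot w u = - u j" using wd by simp
    hence "wdot w u = 0" using M[OF u] by (intro int_mult_small_eq_0[of M _ "- u j"]) simp_all
    hence "u = v" using u w by auto
    thus False using \<open>wdot w u = 0\<close> \<open>wdot w' u = 0\<close> wd j by simp
  qed
  thus ?case by blast
qed

lemma exists_inj_on_wdot:
  assumes "finite A"
  shows "\<exists>w::'d::finite \<Rightarrow> int. inj_on (wdot w) A"
proof -
  define D where "D = (\<lambda>(a, b). a - b) ` {(a, b). a \<in> A \<and> b \<in> A \<and> a \<noteq> b}"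
  have "finite D" unfolding D_def
    by (rule finite_imageI, rule finite_subset[of _ "A \<times> A"]) (use assms in auto)
  moreover have "0 \<notin> D" unfolding D_def by auto
  ultimately obtain w :: "'d \<Rightarrow> int" where w: "\<forall>v\<in>D. wdot w v \<noteq> 0"
    using separating_weight_exists by blast
  have "inj_on (wdot w) A"
  proof (rule inj_onI, rule ccontr)
    fix a b assume "a \<in> A" "b \<in> A" "wdot w a = wdot w b" "a \<noteq> b"
    hence "a - b \<in> D" "wdot w (a - b) = 0" unfolding D_def by (auto simp: wdot_diff)
    thus False using w by blast
  qed
  thus ?thesis by blast
qed

text \<open>For \<open>L\<close> large the \<open>\<lambda>\<close>-degree dominates the weight: \<open>weight w L\<close> orders \<open>(a, k)\<close> lexicographically
  by \<open>(k, wdot w a)\<close>.\<close>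
lemma inj_on_weight:
  assumes winj: "inj_on (wdot w) (fst ` S)" and M0: "\<forall>s\<in>S. \<bar>wdot w (fst s)\<bar> \<le> M0" and L: "2 * M0 < L"
  shows "inj_on (weight w L) S"
proof (rule inj_onI)
  fix s s' assume s: "s \<in> S" "s' \<in> S" "weight w L s = weight w L s'"
  have "L * (int (snd s) - int (snd s')) = wdot w (fst s') - wdot w (fst s)"
    using s(3) unfolding weight_def by (simp add: algebra_simps)
  moreover have "\<bar>wdot w (fst s)\<bar> \<le> M0" "\<bar>wdot w (fst s')\<bar> \<le> M0" using M0 s by auto
  hence "\<bar>wdot w (fst s') - wdot w (fst s)\<bar> < L" using L by simp
  ultimately have "int (snd s) - int (snd s') = 0" by (rule int_mult_small_eq_0)
  hence k: "snd s = snd s'" by simp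
  hence "wdot w (fst s) = wdot w (fst s')" using s(3) unfolding weight_def by simp
  hence "fst s = fst s'" using winj s unfolding inj_on_def by blast
  thus "s = s'" using k by (simp add: prod_eq_iff)
qed

lemma weight_sum_eq_degree:
  assumes E: "wdot w a1 + wdot w a2 + L * int (k1 + k2) = L * int Q"
    and M0: "\<bar>wdot w a1\<bar> \<le> M0" "\<bar>wdot w a2\<bar> \<le> M0" and L: "2 * M0 < L"
  shows "k1 + k2 = Q" "wdot w a1 + wdot w a2 = 0"
proof -
  have "L * (int (k1 + k2) - int Q) = - (wdot w a1 + wdot w a2)" using E by (simp add: algebra_simps)
  moreover have "\<bar>- (wdot w a1 + wdot w a2)\<bar> < L" using M0 L by linarith
  ultimately have "int (k1 + k2) - int Q = 0" by (rule int_mult_small_eq_0)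
  thus "k1 + k2 = Q" by simp
  thus "wdot w a1 + wdot w a2 = 0" using E by simp
qed

lemma common_nonzero_point:
  fixes f g :: "('d::finite \<Rightarrow> int) \<times> nat \<Rightarrow> complex"
  assumes lf: "is_lp f" and lg: "is_lp g" and nf: "lp_supp f \<noteq> {}" and ng: "lp_supp g \<noteq> {}"
  shows "\<exists>x \<mu>. (\<forall>j. x j \<noteq> 0) \<and> lp_eval f x \<mu> \<noteq> 0 \<and> lp_eval g x \<mu> \<noteq> 0"
proof -
  define S where "S = lp_supp f \<union> lp_supp g"
  have finS: "finite S" using lf lg unfolding S_def is_lp_def lp_supp_def by auto
  obtain w :: "'d \<Rightarrow> int" where winj: "inj_on (wdot w) (fst ` S)"
    using exists_inj_on_wdot finS by blast
  define M0 where "M0 = Max (insert 0 ((\<lambda>s. \<bar>wdot w (fst s)\<bar>) ` S))"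
  have M0: "\<forall>s\<in>S. \<bar>wdot w (fst s)\<bar> \<le> M0" and "M0 \<ge> 0"
    unfolding M0_def using finS by (auto intro: Max_ge)
  define L where "L = 2 * M0 + 1"
  have injS: "inj_on (weight w L) S" using inj_on_weight[OF winj M0] unfolding L_def by simp
  text \<open>With distinct weights, the top part of each factor is a single monomial, so it is nonzero at 1.\<close>
  have ev: "eventually (\<lambda>t. lp_eval c (zcurve w (\<lambda>_. 1) t) (lcurve L 1 t) \<noteq> 0) at_top"
    if lc: "is_lp c" and nc: "lp_supp c \<noteq> {}" and sub: "lp_supp c \<subseteq> S" for c
  proof -
    obtain s0 where s0: "s0 \<in> lp_supp c" "lp_supp (top_part c w L) = {s0}" "weight w L s0 = top_weight c w L"
      using top_part_singleton[OF lc nc inj_on_subset[OF injS sub]] by blast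
    have "lp_eval (top_part c w L) (\<lambda>_. 1) 1 = c s0"
      using lp_eval_singleton[OF s0(2)] s0(3) by (simp add: zpow_one top_part_def)
    moreover have "c s0 \<noteq> 0" using s0(1) unfolding lp_supp_def by simp
    ultimately have "eventually (\<lambda>t. lp_eval c (zcurve w (\<lambda>_. 1) t) (lcurve L 1 t) / complex_of_real t powi top_weight c w L \<noteq> 0) at_top"
      using tendsto_imp_eventually_ne[OF tendsto_top_part[OF lc nc, of w "\<lambda>_. 1" L 1], of 0] by simp
    thus ?thesis by (rule eventually_mono) auto
  qed
  have sf: "lp_supp f \<subseteq> S" and sg: "lp_supp g \<subseteq> S" unfolding S_def by auto
  obtain t where t: "t > 0" "lp_eval f (zcurve w (\<lambda>_. 1) t) (lcurve L 1 t) \<noteq> 0"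
    "lp_eval g (zcurve w (\<lambda>_. 1) t) (lcurve L 1 t) \<noteq> 0"
    using eventually_happens'[OF trivial_limit_at_top_linorder
      eventually_conj[OF eventually_gt_at_top[of 0] eventually_conj[OF ev[OF lf nf sf] ev[OF lg ng sg]]]] by blast
  moreover have "\<forall>j. zcurve w (\<lambda>_. 1) t j \<noteq> 0" using t(1) unfolding zcurve_def by simp
  ultimately show ?thesis by blast
qed

section \<open>The fundamental domain and its neighbours\<close>

definition csum :: "('d::finite \<Rightarrow> int) \<Rightarrow> int" where "csum a = (\<Sum>j\<in>UNIV. a j)"

lemma Wdom_eq_PiE: "Wdom q = Pi\<^sub>E UNIV (\<lambda>j. {0..<int (q j)})"
  unfolding Wdom_def by (auto simp: PiE_def extensional_def Pi_def)

lemma finite_Wdom: "finite (Wdom (q::'d::finite \<Rightarrow> nat))"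
  unfolding Wdom_eq_PiE by (intro finite_PiE) auto

lemma neighbors_coord_le:
  assumes "n' \<in> neighbors w"
  shows "\<bar>n' j - w j\<bar> \<le> 1"
proof -
  have "\<bar>n' j - w j\<bar> \<le> (\<Sum>i\<in>UNIV. \<bar>n' i - w i\<bar>)"
    by (rule member_le_sum) auto
  thus ?thesis using assms unfolding neighbors_def by simp
qed

lemma finite_neighbors: "finite (neighbors (w::'d::finite \<Rightarrow> int))"
proof (rule finite_subset)
  show "neighbors w \<subseteq> Pi\<^sub>E UNIV (\<lambda>j. {w j - 1..w j + 1})"
  proof
    fix n' assume "n' \<in> neighbors w"
    hence "\<bar>n' j - w j\<bar> \<le> 1" for j by (rule neighbors_coord_le)
    hence "n' j \<in> {w j - 1..w j + 1}" for j using abs_le_iff[of "n' j - w j" 1] by auto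
    thus "n' \<in> Pi\<^sub>E UNIV (\<lambda>j. {w j - 1..w j + 1})" by (simp add: PiE_iff)
  qed
  show "finite (Pi\<^sub>E UNIV (\<lambda>j. {w j - 1..w j + 1}))" by (intro finite_PiE) auto
qed

lemma csum_diff: "csum a - csum b = (\<Sum>j\<in>UNIV. a j - b j)"
  unfolding csum_def by (simp add: sum_subtractf)

lemma csum_neighbor_le:
  assumes "n' \<in> neighbors w"
  shows "csum n' - csum w \<le> 1"
proof -
  have "(\<Sum>j\<in>UNIV. n' j - w j) \<le> (\<Sum>j\<in>UNIV. \<bar>n' j - w j\<bar>)" by (rule sum_mono) auto
  thus ?thesis using assms unfolding neighbors_def csum_diff by simp
qed

lemma red_in_Wdom: "\<forall>j. q j > 0 \<Longrightarrow> red q n \<in> Wdom q"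
  unfolding red_def Wdom_def by auto

lemma red_quo_eq: "n j = red q n j + int (q j) * quo q n j"
  unfolding red_def quo_def by simp

lemma abs_quo_neighbor_le:
  assumes q: "\<forall>j. q j > 0" and w: "w \<in> Wdom q" and n: "n' \<in> neighbors w"
  shows "\<bar>quo q n' j\<bar> \<le> 1"
proof -
  have w1: "0 \<le> w j" "w j < int (q j)" using w unfolding Wdom_def by auto
  have b: "-1 \<le> n' j" "n' j \<le> int (q j)" using neighbors_coord_le[OF n, of j] w1 by (auto simp: abs_le_iff)
  have qp: "int (q j) > 0" using q by simp
  have "(-1) div int (q j) \<le> n' j div int (q j)" by (rule zdiv_mono1[OF b(1) qp])
  moreover have "(-1) div int (q j) = -1" using qp by (simp add: div_eq_minus1)
  moreover have "n' j div int (q j) \<le> int (q j) div int (q j)" by (rule zdiv_mono1[OF b(2) qp])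
  ultimately show ?thesis using qp unfolding quo_def by simp
qed

lemma csum_red_quo: "csum n = csum (red q n) + wdot (\<lambda>j. int (q j)) (quo q n)"
proof -
  have "(\<Sum>j\<in>UNIV. n j) = (\<Sum>j\<in>UNIV. red q n j + int (q j) * quo q n j)"
    by (rule sum.cong[OF refl], rule red_quo_eq)
  thus ?thesis by (simp add: sum.distrib csum_def wdot_def)
qed

lemma forward_neighbor_iff:
  "(n' \<in> neighbors a \<and> csum n' - csum a = 1) \<longleftrightarrow> (\<exists>j. n' = a(j := a j + 1))"
proof
  assume "\<exists>j. n' = a(j := a j + 1)"
  then obtain j where j: "n' = a(j := a j + 1)" by blast
  have d: "(\<lambda>i. n' i - a i) = (\<lambda>i. if i = j then 1 else 0)" using j by auto
  have d2: "(\<lambda>i. \<bar>n' i - a i\<bar>) = (\<lambda>i. if i = j then 1 else 0)" using j by auto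
  have "(\<Sum>i\<in>UNIV. \<bar>n' i - a i\<bar>) = 1" unfolding d2 by simp
  moreover have "(\<Sum>i\<in>UNIV. n' i - a i) = 1" unfolding d by simp
  ultimately show "n' \<in> neighbors a \<and> csum n' - csum a = 1" unfolding neighbors_def csum_diff by simp
next
  assume h: "n' \<in> neighbors a \<and> csum n' - csum a = 1"
  define d where "d = (\<lambda>i. n' i - a i)"
  have s1: "(\<Sum>i\<in>UNIV. \<bar>d i\<bar>) = 1" using h unfolding neighbors_def d_def by simp
  have s2: "(\<Sum>i\<in>UNIV. d i) = 1" using h unfolding csum_diff d_def by simp
  have "(\<Sum>i\<in>UNIV. \<bar>d i\<bar> - d i) = 0" using s1 s2 by (simp add: sum_subtractf)
  hence "\<forall>i\<in>UNIV. \<bar>d i\<bar> - d i = 0" by (subst sum_nonneg_eq_0_iff[symmetric]) auto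
  hence nn: "d i \<ge> 0" for i using abs_ge_zero[of "d i"] by simp
  obtain j where dj: "d j \<noteq> 0"
  proof (rule ccontr)
    assume "\<not> thesis"
    hence "\<forall>j. d j = 0" using that by blast
    hence "(\<Sum>i\<in>UNIV. d i) = 0" by simp
    thus False using s2 by simp
  qed
  have split: "(\<Sum>i\<in>UNIV. d i) = d j + (\<Sum>i\<in>UNIV - {j}. d i)"
    by (simp add: sum.remove[of UNIV j])
  have rest_nn: "(\<Sum>i\<in>UNIV - {j}. d i) \<ge> 0" by (rule sum_nonneg) (use nn in auto)
  have "d j \<ge> 1" using dj nn[of j] by simp
  hence dj1: "d j = 1" and rest0: "(\<Sum>i\<in>UNIV - {j}. d i) = 0" using split s2 rest_nn by linarith+
  have "\<forall>i\<in>UNIV - {j}. d i = 0" using rest0 by (subst sum_nonneg_eq_0_iff[symmetric]) (use nn in auto)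
  hence "n' = a(j := a j + 1)" using dj1 unfolding d_def by (auto simp: fun_eq_iff)
  thus "\<exists>j. n' = a(j := a j + 1)" by blast
qed

lemma inj_forward_step: "inj (\<lambda>j. a(j := (a j + 1::int)))"
proof (rule injI)
  fix j k assume h: "a(j := a j + 1) = a(k := a k + 1)"
  show "j = k"
  proof (rule ccontr)
    assume "j \<noteq> k"
    from fun_cong[OF h, of j] this show False by simp
  qed
qed

definition Wshift :: "('d \<Rightarrow> nat) \<Rightarrow> 'd \<Rightarrow> ('d \<Rightarrow> int) \<Rightarrow> ('d \<Rightarrow> int)" where
  "Wshift q j \<zeta> = \<zeta>(j := (\<zeta> j + 1) mod int (q j))"

lemma Wshift_in_Wdom: "\<forall>j. q j > 0 \<Longrightarrow> \<zeta> \<in> Wdom q \<Longrightarrow> Wshift q j0 \<zeta> \<in> Wdom q"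
  unfolding Wshift_def Wdom_def by auto

lemma Wshift_iterate_mem:
  assumes S: "S \<subseteq> Wdom q" and inv: "\<forall>j. \<forall>\<zeta>\<in>S. Wshift q j \<zeta> \<in> S" and z: "\<zeta> \<in> S"
  shows "\<zeta>(j := (\<zeta> j + int n) mod int (q j)) \<in> S"
proof (induction n)
  case 0
  have "0 \<le> \<zeta> j" "\<zeta> j < int (q j)" using S z unfolding Wdom_def by auto
  hence "\<zeta>(j := (\<zeta> j + int 0) mod int (q j)) = \<zeta>" by (simp add: fun_eq_iff)
  thus ?case using z by simp
next
  case (Suc n)
  have "((\<zeta> j + int n) mod int (q j) + 1) mod int (q j) = (\<zeta> j + int (Suc n)) mod int (q j)"
    by (simp only: mod_add_left_eq) (simp add: ac_simps)
  hence "Wshift q j (\<zeta>(j := (\<zeta> j + int n) mod int (q j))) = \<zeta>(j := (\<zeta> j + int (Suc n)) mod int (q j))"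
    unfolding Wshift_def by (simp add: fun_eq_iff)
  thus ?case using inv Suc by metis
qed

lemma Wshift_closed_update:
  assumes q: "\<forall>j. q j > 0" and S: "S \<subseteq> Wdom q" and inv: "\<forall>j. \<forall>\<zeta>\<in>S. Wshift q j \<zeta> \<in> S"
    and z: "\<zeta> \<in> S" and m: "0 \<le> m" "m < int (q j)"
  shows "\<zeta>(j := m) \<in> S"
proof -
  define n where "n = nat ((m - \<zeta> j) mod int (q j))"
  have "int (q j) > 0" using q by simp
  hence "int n = (m - \<zeta> j) mod int (q j)" unfolding n_def by simp
  hence "(\<zeta> j + int n) mod int (q j) = m mod int (q j)" by (simp add: mod_add_right_eq)
  also have "\<dots> = m" using m by simp
  finally show ?thesis using Wshift_iterate_mem[OF S inv z, of j n] by simp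
qed

lemma Wshift_closed_eq_Wdom:
  assumes q: "\<forall>j. q j > 0" and S: "S \<subseteq> Wdom q" and z0: "\<zeta>0 \<in> S"
    and inv: "\<forall>j. \<forall>\<zeta>\<in>S. Wshift q j \<zeta> \<in> S"
  shows "Wdom q \<subseteq> S"
proof
  fix \<eta> assume \<eta>: "\<eta> \<in> Wdom q"
  have "finite J \<Longrightarrow> (\<lambda>j. if j \<in> J then \<eta> j else \<zeta>0 j) \<in> S" for J
  proof (induction J rule: finite_induct)
    case empty thus ?case using z0 by simp
  next
    case (insert i J)
    have "(\<lambda>j. if j \<in> insert i J then \<eta> j else \<zeta>0 j) = (\<lambda>j. if j \<in> J then \<eta> j else \<zeta>0 j)(i := \<eta> i)"
      by (auto simp: fun_eq_iff)
    moreover have "0 \<le> \<eta> i" "\<eta> i < int (q i)" using \<eta> unfolding Wdom_def by auto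
    ultimately show ?case using Wshift_closed_update[OF q S inv insert.IH] by simp
  qed
  from this[of UNIV] show "\<eta> \<in> S" by simp
qed

section \<open>Top parts of the characteristic polynomial\<close>

definition hop :: "('d::finite \<Rightarrow> nat) \<Rightarrow> ('d \<Rightarrow> complex) \<Rightarrow> (('d \<Rightarrow> int) \<Rightarrow> int) \<Rightarrow> real
    \<Rightarrow> ('d \<Rightarrow> int) \<Rightarrow> ('d \<Rightarrow> int) \<Rightarrow> complex" where
  "hop q x e t a b =
     (\<Sum>n'\<in>neighbors a. if red q n' = b then zpow x (quo q n') * complex_of_real t powi e n' else 0)"

lemma Dmat_zcurve:
  assumes "t \<noteq> 0"
  shows "Dmat q V (zcurve w x t) a b = (if a = b then V a else 0) - hop q x (\<lambda>n'. wdot w (quo q n')) t a b"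
  unfolding Dmat_def hop_def using assms
  by (intro arg_cong2[where f = minus] refl sum.cong) (auto simp: zpow_zcurve mult.commute)

lemma hop_mult_power_int:
  assumes "t \<noteq> 0"
  shows "hop q x e t a b * complex_of_real t powi k = hop q x (\<lambda>n'. e n' + k) t a b"
  unfolding hop_def sum_distrib_right using assms by (intro sum.cong refl) (simp add: power_int_add)

lemma hop_cong:
  assumes "\<And>n'. n' \<in> neighbors a \<Longrightarrow> red q n' = b \<Longrightarrow> e n' = e' n'"
  shows "hop q x e t a b = hop q x e' t a b"
  unfolding hop_def using assms by (intro sum.cong) auto

lemma tendsto_hop:
  assumes "\<And>n'. n' \<in> neighbors a \<Longrightarrow> e n' \<le> 0"
  shows "((\<lambda>t. hop q x e t a b)
    \<longlongrightarrow> (\<Sum>n'\<in>neighbors a. if red q n' = b \<and> e n' = 0 then zpow x (quo q n') else 0)) at_top"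
  unfolding hop_def
proof (rule tendsto_sum)
  fix n' assume "n' \<in> neighbors a"
  from tendsto_mult_power_int_nonpos[OF assms[OF this], of "zpow x (quo q n')"]
  show "((\<lambda>t. if red q n' = b then zpow x (quo q n') * complex_of_real t powi e n' else 0)
    \<longlongrightarrow> (if red q n' = b \<and> e n' = 0 then zpow x (quo q n') else 0)) at_top"
    by (cases "red q n' = b") auto
qed

lemma charP_lambda_rescaled:
  assumes t: "t > 0"
  shows "charP q V (zcurve w x t) (lcurve L \<mu> t) / complex_of_real t powi (L * int (card (Wdom q))) =
    detS (Wdom q) (\<lambda>a b. (if a = b then V a / complex_of_real t powi L - \<mu> else 0)
      - hop q x (\<lambda>n'. wdot w (quo q n') - L) t a b)"
proof -
  have t0: "t \<noteq> 0" and T: "complex_of_real t \<noteq> 0" using t by simp_all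
  have "hop q x (\<lambda>n'. wdot w (quo q n')) t a b / complex_of_real t powi L =
      hop q x (\<lambda>n'. wdot w (quo q n') - L) t a b" for a b
    using hop_mult_power_int[OF t0, of q x "\<lambda>n'. wdot w (quo q n')" a b "-L"]
    by (simp add: power_int_minus divide_inverse)
  hence "(Dmat q V (zcurve w x t) a b - (if a = b then lcurve L \<mu> t else 0)) / complex_of_real t powi L =
      (if a = b then V a / complex_of_real t powi L - \<mu> else 0) - hop q x (\<lambda>n'. wdot w (quo q n') - L) t a b"
    for a b
    using T by (cases "a = b") (simp_all add: Dmat_zcurve[OF t0] lcurve_def diff_divide_distrib)
  thus ?thesis unfolding charP_def by (simp add: detS_divide[symmetric] power_int_mult)
qed

lemma tendsto_charP_lambda_dominant:
  assumes q: "\<forall>j. q j > 0" and L: "(\<Sum>j\<in>UNIV. \<bar>w j\<bar>) < L"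
  shows "((\<lambda>t. charP q V (zcurve w x t) (lcurve L \<mu> t) / complex_of_real t powi (L * int (card (Wdom q))))
            \<longlongrightarrow> (-\<mu>) ^ card (Wdom q)) at_top"
proof -
  define E where "E t a b = (if a = b then V a / complex_of_real t powi L - \<mu> else 0)
    - hop q x (\<lambda>n'. wdot w (quo q n') - L) t a b" for t a b
  have lim: "((\<lambda>t. E t a b) \<longlongrightarrow> (if a = b then - \<mu> else 0)) at_top" if a: "a \<in> Wdom q" for a b
  proof -
    have "wdot w (quo q n') - L < 0" if "n' \<in> neighbors a" for n'
      using wdot_bound[of "quo q n'" w] abs_quo_neighbor_le[OF q a that] L by fastforce
    moreover from this
    have "(\<Sum>n'\<in>neighbors a. if red q n' = b \<and> wdot w (quo q n') - L = 0 then zpow x (quo q n') else 0) = 0"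
      by (intro sum.neutral) auto
    ultimately have hop0: "((\<lambda>t. hop q x (\<lambda>n'. wdot w (quo q n') - L) t a b) \<longlongrightarrow> 0) at_top"
      using tendsto_hop[of a "\<lambda>n'. wdot w (quo q n') - L" q x b] by (simp add: less_imp_le)
    have "0 \<le> (\<Sum>j\<in>UNIV. \<bar>w j\<bar>)" by (rule sum_nonneg) simp
    hence "0 < L" using L by linarith
    hence V0: "((\<lambda>t. V a / complex_of_real t powi L) \<longlongrightarrow> 0) at_top"
      using tendsto_mult_power_int_nonpos[of "-L" "V a"] by (simp add: power_int_minus divide_inverse)
    have "((\<lambda>t. E t a b) \<longlongrightarrow> (if a = b then 0 - \<mu> else 0) - 0) at_top" unfolding E_def
    proof (intro tendsto_diff hop0)
      have "((\<lambda>t. V a / complex_of_real t powi L - \<mu>) \<longlongrightarrow> 0 - \<mu>) at_top" by (intro tendsto_diff V0 tendsto_const)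
      thus "((\<lambda>t. if a = b then V a / complex_of_real t powi L - \<mu> else 0) \<longlongrightarrow> (if a = b then 0 - \<mu> else 0)) at_top"
        by (cases "a = b") simp_all
    qed
    thus ?thesis by (simp only: diff_0 diff_zero)
  qed
  have "((\<lambda>t. detS (Wdom q) (E t)) \<longlongrightarrow> detS (Wdom q) (\<lambda>a b. if a = b then - \<mu> else 0)) at_top"
    by (rule tendsto_detS) (rule lim)
  also have "detS (Wdom q) (\<lambda>a b. if a = b then - \<mu> else 0) = (-\<mu>) ^ card (Wdom q)"
    using detS_diagonal[OF finite_Wdom[of q], of "\<lambda>_. - \<mu>"] by simp
  finally show ?thesis
    by (rule Lim_transform_eventually)
      (rule eventually_mono[OF eventually_gt_at_top[of 0]], simp add: E_def charP_lambda_rescaled)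
qed

lemma charP_nonzero_somewhere:
  assumes q: "\<forall>j. q j > 0"
  shows "\<exists>z lam. (\<forall>j. z j \<noteq> 0) \<and> charP q V z lam \<noteq> 0"
proof -
  have "eventually (\<lambda>t. charP q V (zcurve (\<lambda>_. 0) (\<lambda>_. 1) t) (lcurve 1 1 t) /
      complex_of_real t powi (1 * int (card (Wdom q))) \<noteq> 0) at_top"
    using tendsto_imp_eventually_ne[OF tendsto_charP_lambda_dominant[OF q, of "\<lambda>_. 0" 1 V "\<lambda>_. 1" 1], of 0]
    by simp
  then obtain t where "charP q V (zcurve (\<lambda>_. 0) (\<lambda>_. 1) t) (lcurve 1 1 t) \<noteq> 0"
    using eventually_happens'[OF trivial_limit_at_top_linorder] by force
  moreover have "\<forall>j. zcurve (\<lambda>_. 0) (\<lambda>_. 1) t j \<noteq> 0" unfolding zcurve_def by simp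
  ultimately show ?thesis by blast
qed

text \<open>The top part of \<open>\<D>(x) - \<lambda>\<close> for the weight \<open>q\<close>: only hops increasing \<open>\<Sum>\<^sub>j n\<^sub>j\<close> survive.\<close>
definition Afwd :: "('d::finite \<Rightarrow> nat) \<Rightarrow> ('d \<Rightarrow> complex) \<Rightarrow> ('d \<Rightarrow> int) \<Rightarrow> ('d \<Rightarrow> int) \<Rightarrow> complex" where
  "Afwd q x a b = - (\<Sum>n'\<in>neighbors a. if red q n' = b \<and> csum n' - csum a = 1 then zpow x (quo q n') else 0)"

lemma hop_conj_csum:
  assumes t0: "t \<noteq> 0"
  shows "complex_of_real t powi (- csum a) * hop q x (\<lambda>n'. wdot (\<lambda>j. int (q j)) (quo q n')) t a b
      / complex_of_real t powi (- csum b) / complex_of_real t = hop q x (\<lambda>n'. csum n' - csum a - 1) t a b"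
proof -
  let ?T = "complex_of_real t" and ?h = "hop q x (\<lambda>n'. wdot (\<lambda>j. int (q j)) (quo q n')) t a b"
  have T: "?T \<noteq> 0" using t0 by simp
  have "?T powi (csum b - csum a - 1) = ?T powi csum b / ?T powi csum a / ?T"
    using T by (simp add: power_int_diff)
  hence "?T powi (- csum a) * ?h / ?T powi (- csum b) / ?T = ?h * ?T powi (csum b - csum a - 1)"
    using T by (simp add: power_int_minus field_simps)
  also have "\<dots> = hop q x (\<lambda>n'. csum n' - csum a - 1) t a b"
    unfolding hop_mult_power_int[OF t0]
  proof (rule hop_cong)
    fix n' assume "red q n' = b"
    thus "wdot (\<lambda>j. int (q j)) (quo q n') + (csum b - csum a - 1) = csum n' - csum a - 1"
      using csum_red_quo[of n' q] by simp
  qed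
  finally show ?thesis .
qed

text \<open>Conjugating by \<open>diag (t\<^bsup>\<Sum>\<^sub>j a\<^sub>j\<^esup>)\<close> gives every hop the exponent \<open>\<Sum>\<^sub>j n'\<^sub>j - \<Sum>\<^sub>j a\<^sub>j \<le> 1\<close>.\<close>
lemma charP_forward_rescaled:
  assumes t: "t > 0"
  shows "charP q V (zcurve (\<lambda>j. int (q j)) x t) (lcurve 1 \<mu> t) / complex_of_real t ^ card (Wdom q) =
    detS (Wdom q) (\<lambda>a b. (if a = b then V a * complex_of_real t powi (-1) - \<mu> else 0)
      - hop q x (\<lambda>n'. csum n' - csum a - 1) t a b)"
proof -
  let ?T = "complex_of_real t"
  have t0: "t \<noteq> 0" and T: "?T \<noteq> 0" using t by simp_all
  define M where "M a b = Dmat q V (zcurve (\<lambda>j. int (q j)) x t) a b - (if a = b then lcurve 1 \<mu> t else 0)" for a b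
  have entry: "?T powi (- csum a) * M a b / ?T powi (- csum b) / ?T =
      (if a = b then V a * ?T powi (-1) - \<mu> else 0) - hop q x (\<lambda>n'. csum n' - csum a - 1) t a b" for a b
    using hop_conj_csum[OF t0, of a q x b] T unfolding M_def Dmat_zcurve[OF t0]
    by (cases "a = b") (simp_all add: lcurve_def power_int_minus field_simps)
  have "charP q V (zcurve (\<lambda>j. int (q j)) x t) (lcurve 1 \<mu> t) =
      detS (Wdom q) (\<lambda>a b. ?T powi (- csum a) * M a b / ?T powi (- csum b))"
    unfolding charP_def M_def by (rule detS_conj_diagonal[symmetric]) (use T finite_Wdom[of q] in auto)
  thus ?thesis using detS_divide[of "Wdom q" "\<lambda>a b. ?T powi (- csum a) * M a b / ?T powi (- csum b)" ?T] entry
    by simp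
qed

lemma tendsto_charP_forward:
  assumes q: "\<forall>j. q j > 0"
  shows "((\<lambda>t. charP q V (zcurve (\<lambda>j. int (q j)) x t) (lcurve 1 \<mu> t) / complex_of_real t powi int (card (Wdom q)))
           \<longlongrightarrow> detS (Wdom q) (\<lambda>a b. Afwd q x a b - (if a = b then \<mu> else 0))) at_top"
proof -
  define E where "E t a b = (if a = b then V a * complex_of_real t powi (-1) - \<mu> else 0) -
     hop q x (\<lambda>n'. csum n' - csum a - 1) t a b" for t a b
  have lim: "((\<lambda>t. E t a b) \<longlongrightarrow> Afwd q x a b - (if a = b then \<mu> else 0)) at_top" for a b
  proof -
    have "csum n' - csum a - 1 \<le> 0" if "n' \<in> neighbors a" for n'
      using csum_neighbor_le[OF that] by simp
    from tendsto_hop[of a "\<lambda>n'. csum n' - csum a - 1", OF this, of q x b]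
    have hop0: "((\<lambda>t. hop q x (\<lambda>n'. csum n' - csum a - 1) t a b) \<longlongrightarrow> - Afwd q x a b) at_top"
      unfolding Afwd_def by simp
    have V0: "((\<lambda>t. V a * complex_of_real t powi (-1)) \<longlongrightarrow> 0) at_top"
      using tendsto_mult_power_int_nonpos[of "-1" "V a"] by simp
    have "((\<lambda>t. E t a b) \<longlongrightarrow> (if a = b then 0 - \<mu> else 0) - - Afwd q x a b) at_top" unfolding E_def
    proof (intro tendsto_diff hop0)
      have "((\<lambda>t. V a * complex_of_real t powi (-1) - \<mu>) \<longlongrightarrow> 0 - \<mu>) at_top" by (intro tendsto_diff V0 tendsto_const)
      thus "((\<lambda>t. if a = b then V a * complex_of_real t powi (-1) - \<mu> else 0) \<longlongrightarrow> (if a = b then 0 - \<mu> else 0)) at_top"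
        by (cases "a = b") simp_all
    qed
    moreover have "(if a = b then 0 - \<mu> else 0) - - Afwd q x a b = Afwd q x a b - (if a = b then \<mu> else 0)"
      by simp
    ultimately show ?thesis by simp
  qed
  have "((\<lambda>t. detS (Wdom q) (E t)) \<longlongrightarrow> detS (Wdom q) (\<lambda>a b. Afwd q x a b - (if a = b then \<mu> else 0))) at_top"
    by (rule tendsto_detS) (rule lim)
  thus ?thesis
    by (rule Lim_transform_eventually)
      (rule eventually_mono[OF eventually_gt_at_top[of 0]], unfold E_def, simp add: charP_forward_rescaled)
qed

lemma zpow_floquet:
  assumes nz: "\<forall>j. \<Omega> j \<noteq> 0" and Ox: "\<forall>j. \<Omega> j ^ q j = x j"
  shows "zpow x (quo q n) * zpow \<Omega> (red q n) = zpow \<Omega> n"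
proof -
  have "zpow x (quo q n) * zpow \<Omega> (red q n) = (\<Prod>j\<in>UNIV. x j powi quo q n j * \<Omega> j powi red q n j)"
    unfolding zpow_def by (simp add: prod.distrib)
  also have "\<dots> = (\<Prod>j\<in>UNIV. \<Omega> j powi n j)"
  proof (rule prod.cong[OF refl])
    fix j
    have "x j powi quo q n j = \<Omega> j powi (int (q j) * quo q n j)"
      using Ox by (simp add: power_int_mult flip: power_int_of_nat)
    hence "x j powi quo q n j * \<Omega> j powi red q n j = \<Omega> j powi (red q n j + int (q j) * quo q n j)"
      using nz by (simp add: power_int_add)
    thus "x j powi quo q n j * \<Omega> j powi red q n j = \<Omega> j powi n j" by (simp flip: red_quo_eq)
  qed
  finally show ?thesis unfolding zpow_def .
qed

lemma zpow_forward_step: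
  assumes nz: "\<Omega> j \<noteq> 0"
  shows "zpow \<Omega> (a(j := a j + 1)) = \<Omega> j * zpow \<Omega> a"
proof -
  have "zpow \<Omega> (a(j := a j + 1)) = (\<Prod>i\<in>UNIV. (if i = j then \<Omega> j else 1) * \<Omega> i powi a i)"
    unfolding zpow_def by (rule prod.cong[OF refl]) (use nz in \<open>simp add: power_int_add_1'\<close>)
  also have "\<dots> = \<Omega> j * zpow \<Omega> a" unfolding zpow_def prod.distrib by simp
  finally show ?thesis .
qed

text \<open>\<open>n \<mapsto> \<Omega>\<^sup>n\<close> satisfies the Floquet condition for \<open>x\<close>, so its restriction to \<open>W\<close> is an eigenvector.\<close>
lemma Afwd_eigenvector:
  assumes q: "\<forall>j. q j > 0" and nz: "\<forall>j. \<Omega> j \<noteq> 0" and Ox: "\<forall>j. \<Omega> j ^ q j = x j"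
  shows "(\<Sum>b\<in>Wdom q. Afwd q x a b * zpow \<Omega> b) = - (\<Sum>j\<in>UNIV. \<Omega> j) * zpow \<Omega> a"
proof -
  let ?F = "\<lambda>n'. csum n' - csum a = 1"
  have "(\<Sum>b\<in>Wdom q. Afwd q x a b * zpow \<Omega> b) =
     - (\<Sum>b\<in>Wdom q. \<Sum>n'\<in>neighbors a. if b = red q n' then (if ?F n' then zpow x (quo q n') * zpow \<Omega> (red q n') else 0) else 0)"
    unfolding Afwd_def sum_distrib_right sum_negf[symmetric]
    by (intro sum.cong refl arg_cong[where f = uminus]) auto
  also have "\<dots> = - (\<Sum>n'\<in>neighbors a. \<Sum>b\<in>Wdom q. if b = red q n' then (if ?F n' then zpow x (quo q n') * zpow \<Omega> (red q n') else 0) else 0)"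
    by (subst sum.swap) simp
  also have "\<dots> = - (\<Sum>n'\<in>neighbors a. if ?F n' then zpow x (quo q n') * zpow \<Omega> (red q n') else 0)"
    using red_in_Wdom[OF q] finite_Wdom[of q] by simp
  also have "\<dots> = - (\<Sum>n'\<in>neighbors a. if ?F n' then zpow \<Omega> n' else 0)"
    by (intro arg_cong[where f=uminus] sum.cong refl) (subst zpow_floquet[OF nz Ox], rule refl)
  also have "\<dots> = - (\<Sum>n'\<in>{n'\<in>neighbors a. ?F n'}. zpow \<Omega> n')"
    by (simp add: sum.inter_filter[OF finite_neighbors])
  also have "{n'\<in>neighbors a. ?F n'} = range (\<lambda>j. a(j := a j + 1))"
    using forward_neighbor_iff[of _ a] by blast
  also have "(\<Sum>n'\<in>range (\<lambda>j. a(j := a j + 1)). zpow \<Omega> n') = (\<Sum>j\<in>UNIV. zpow \<Omega> (a(j := a j + 1)))"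
    by (subst sum.reindex[OF inj_forward_step]) simp
  also have "\<dots> = (\<Sum>j\<in>UNIV. \<Omega> j) * zpow \<Omega> a"
    using nz by (simp add: zpow_forward_step sum_distrib_right)
  finally show ?thesis by simp
qed

lemma detS_Afwd_eigenvalue:
  assumes q: "\<forall>j. q j > 0" and nz: "\<forall>j. \<Omega> j \<noteq> 0" and Ox: "\<forall>j. \<Omega> j ^ q j = x j"
  shows "detS (Wdom q) (\<lambda>a b. Afwd q x a b - (if a = b then - (\<Sum>j\<in>UNIV. \<Omega> j) else 0)) = 0"
proof (rule detS_eq_0_if_kernel[OF finite_Wdom])
  show "(\<lambda>_. 0) \<in> Wdom q" using q by (simp add: Wdom_def)
  show "zpow \<Omega> (\<lambda>_. 0) \<noteq> 0" by (simp add: zpow_def)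
  show "\<forall>a\<in>Wdom q. (\<Sum>b\<in>Wdom q. (Afwd q x a b - (if a = b then - (\<Sum>j\<in>UNIV. \<Omega> j) else 0)) * zpow \<Omega> b) = 0"
    using Afwd_eigenvector[OF q nz Ox] finite_Wdom[of q]
    by (simp add: left_diff_distrib sum_subtractf if_distrib[of "\<lambda>u. u * _"] cong: if_cong)
qed

lemma two_power_int_eq_1:
  assumes "(2::complex) powi m = 1"
  shows "m = 0"
proof (rule ccontr)
  have eq: "(2::real) powi m = 2 powi 0" using arg_cong[OF assms, of norm] by (simp add: norm_power_int)
  assume "m \<noteq> 0"
  then consider "m < 0" | "0 < m" by linarith
  thus False
    using eq power_int_strict_increasing[of m 0 "2::real"] power_int_strict_increasing[of 0 m "2::real"]
    by cases auto
qed

lemma zpow_two_at: "zpow (\<lambda>i. if i = j then 2 else 1) a = 2 powi a j"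
proof -
  have "zpow (\<lambda>i. if i = j then 2 else 1) a = (\<Prod>i\<in>UNIV. if i = j then 2 powi a j else 1)"
    unfolding zpow_def by (rule prod.cong) auto
  thus ?thesis by simp
qed

definition lambda_lead_monomial :: "(('d::finite \<Rightarrow> int) \<times> nat \<Rightarrow> complex) \<Rightarrow> nat \<Rightarrow> ('d \<Rightarrow> int) \<Rightarrow> bool" where
  "lambda_lead_monomial f k b \<longleftrightarrow> (\<forall>s\<in>lp_supp f. snd s \<le> k) \<and> (\<forall>a. (a, k) \<in> lp_supp f \<longleftrightarrow> a = b)"

lemma is_monomial_if_lambda_lead_0:
  assumes "lambda_lead_monomial f 0 b"
  shows "is_monomial f"
proof -
  have deg: "\<forall>s\<in>lp_supp f. snd s = 0" and slice: "\<forall>a. (a, 0) \<in> lp_supp f \<longleftrightarrow> a = b"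
    using assms unfolding lambda_lead_monomial_def by auto
  have supp: "lp_supp f = {(b, 0)}"
  proof (intro equalityI subsetI)
    fix s assume s: "s \<in> lp_supp f"
    hence "(fst s, 0) \<in> lp_supp f" using deg by (metis prod.collapse)
    thus "s \<in> {(b, 0)}" using slice deg s by (simp add: prod_eq_iff)
  qed (use slice in simp)
  have "f = (\<lambda>x. if x = (b, 0) then f (b, 0) else 0)"
  proof (rule ext)
    show "f x = (if x = (b, 0) then f (b, 0) else 0)" for x
      using supp unfolding lp_supp_def by (cases "x = (b, 0)") auto
  qed
  moreover have "f (b, 0) \<noteq> 0" using supp unfolding lp_supp_def by auto
  ultimately show ?thesis unfolding is_monomial_def by blast
qed

lemma lambda_lead_monomial_top_part:
  assumes "lambda_lead_monomial f k b" "top_part f w L (b, k) = f (b, k)"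
  shows "lambda_lead_monomial (top_part f w L) k b"
  using assms lp_supp_top_part[of f w L] unfolding lambda_lead_monomial_def
  by (auto simp: lp_supp_def)

section \<open>Roots along loops\<close>

definition lp_poly :: "(('d::finite \<Rightarrow> int) \<times> nat \<Rightarrow> complex) \<Rightarrow> ('d \<Rightarrow> complex) \<Rightarrow> complex poly" where
  "lp_poly c x = (\<Sum>s\<in>lp_supp c. monom (c s * zpow x (fst s)) (snd s))"

lemma poly_lp_poly: "poly (lp_poly c x) \<mu> = lp_eval c x \<mu>"
  unfolding lp_poly_def lp_eval_def lp_supp_def by (simp add: poly_sum poly_monom)

lemma coeff_lp_poly: "coeff (lp_poly c x) k = (\<Sum>s\<in>lp_supp c. if snd s = k then c s * zpow x (fst s) else 0)"
  unfolding lp_poly_def coeff_sum coeff_monom by (rule sum.cong) auto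

lemma card_lp_roots_le:
  assumes lp: "is_lp c" and lead: "lambda_lead_monomial c k b" and x: "\<forall>j. x j \<noteq> 0"
  shows "finite {\<mu>. lp_eval c x \<mu> = 0}" "card {\<mu>. lp_eval c x \<mu> = 0} \<le> k"
proof -
  have fin: "finite (lp_supp c)" using lp unfolding is_lp_def lp_supp_def .
  have deg: "\<forall>s\<in>lp_supp c. snd s \<le> k" and slice: "\<forall>a. (a, k) \<in> lp_supp c \<longleftrightarrow> a = b"
    using lead unfolding lambda_lead_monomial_def by auto
  have top: "s = (b, k)" if "s \<in> lp_supp c" "snd s = k" for s
    using slice that by (metis prod.collapse)
  have "coeff (lp_poly c x) k = (\<Sum>s\<in>lp_supp c. if s = (b, k) then c s * zpow x (fst s) else 0)"
    unfolding coeff_lp_poly by (intro sum.cong) (auto dest: top)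
  also have "\<dots> = c (b, k) * zpow x b" using fin slice by simp
  finally have p0: "lp_poly c x \<noteq> 0" using slice zpow_nonzero[OF x, of b] by (auto simp: lp_supp_def)
  have "degree (lp_poly c x) \<le> k"
  proof (rule degree_le, intro allI impI)
    fix i assume "k < i"
    thus "coeff (lp_poly c x) i = 0" unfolding coeff_lp_poly using deg by (intro sum.neutral) fastforce
  qed
  moreover have "{\<mu>. lp_eval c x \<mu> = 0} = {\<mu>. poly (lp_poly c x) \<mu> = 0}" by (simp add: poly_lp_poly)
  ultimately show "finite {\<mu>. lp_eval c x \<mu> = 0}" "card {\<mu>. lp_eval c x \<mu> = 0} \<le> k"
    using poly_roots_finite[OF p0] card_poly_roots_bound[OF p0] by simp_all
qed

lemma roots_partition:
  assumes finW: "finite W" and inj: "inj_on rr W"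
    and cover: "\<forall>\<zeta>\<in>W. g1 (rr \<zeta>) = 0 \<or> g2 (rr \<zeta>) = 0"
    and b1: "finite {\<mu>. g1 \<mu> = 0}" "card {\<mu>. g1 \<mu> = 0} \<le> k1"
    and b2: "finite {\<mu>. g2 \<mu> = 0}" "card {\<mu>. g2 \<mu> = 0} \<le> k2"
    and cW: "card W = k1 + k2"
  shows "(\<forall>\<zeta>\<in>W. \<not> (g1 (rr \<zeta>) = 0 \<and> g2 (rr \<zeta>) = 0)) \<and> card {\<zeta>\<in>W. g1 (rr \<zeta>) = 0} = k1"
proof -
  define S1 where "S1 = {\<zeta>\<in>W. g1 (rr \<zeta>) = 0}"
  define S2 where "S2 = {\<zeta>\<in>W. g2 (rr \<zeta>) = 0}"
  have f: "finite S1" "finite S2" unfolding S1_def S2_def using finW by auto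
  have "card S1 \<le> card {\<mu>. g1 \<mu> = 0}" "card S2 \<le> card {\<mu>. g2 \<mu> = 0}"
    by (rule card_inj_on_le[OF inj_on_subset[OF inj] _ b1(1)] card_inj_on_le[OF inj_on_subset[OF inj] _ b2(1)];
        auto simp: S1_def S2_def)+
  hence "card S1 \<le> k1" "card S2 \<le> k2" using b1(2) b2(2) by simp_all
  moreover have "S1 \<union> S2 = W" unfolding S1_def S2_def using cover by auto
  ultimately have "card (S1 \<inter> S2) = 0" and cS1: "card S1 = k1"
    using card_Un_Int[OF f] cW by simp_all
  hence "S1 \<inter> S2 = {}" using f by simp
  thus ?thesis using cS1 unfolding S1_def S2_def by blast
qed

text \<open>As \<open>\<theta>\<close> runs over \<open>[0, 2\<pi>]\<close>, \<open>loop_z\<close> turns the coordinate \<open>j0\<close> once around \<open>0\<close>; \<open>loop_root \<zeta>\<close> follows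
  the \<open>q\<^sub>j\<close>-th roots selected by \<open>\<zeta> \<in> W\<close>, and \<open>loop_eig \<zeta>\<close> is the corresponding eigenvalue of \<open>Afwd\<close>.\<close>
definition phase :: "'d \<Rightarrow> real \<Rightarrow> 'd \<Rightarrow> real" where "phase j0 \<theta> j = (if j = j0 then \<theta> else 0)"

definition rou :: "nat \<Rightarrow> int \<Rightarrow> complex" where
  "rou n a = exp (2 * complex_of_real pi * \<i> * of_int a / of_nat n)"

definition loop_z :: "('d::finite \<Rightarrow> nat) \<Rightarrow> ('d \<Rightarrow> real) \<Rightarrow> 'd \<Rightarrow> real \<Rightarrow> 'd \<Rightarrow> complex" where
  "loop_z q \<rho> j0 \<theta> = (\<lambda>j. complex_of_real (\<rho> j ^ q j) * exp (\<i> * complex_of_real (phase j0 \<theta> j)))"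

definition loop_root :: "('d::finite \<Rightarrow> nat) \<Rightarrow> ('d \<Rightarrow> real) \<Rightarrow> 'd \<Rightarrow> real \<Rightarrow> ('d \<Rightarrow> int) \<Rightarrow> 'd \<Rightarrow> complex" where
  "loop_root q \<rho> j0 \<theta> \<zeta> j = complex_of_real (\<rho> j) * exp (\<i> * complex_of_real (phase j0 \<theta> j / real (q j))) * rou (q j) (\<zeta> j)"

definition loop_eig :: "('d::finite \<Rightarrow> nat) \<Rightarrow> ('d \<Rightarrow> real) \<Rightarrow> 'd \<Rightarrow> real \<Rightarrow> ('d \<Rightarrow> int) \<Rightarrow> complex" where
  "loop_eig q \<rho> j0 \<theta> \<zeta> = - (\<Sum>j\<in>UNIV. loop_root q \<rho> j0 \<theta> \<zeta> j)"

lemma exp_2pi_int: "exp (2 * complex_of_real pi * \<i> * of_int k) = 1"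
proof -
  have "exp (complex_of_real (2 * real_of_int k * pi) * \<i>) = 1" by (rule exp_integer_2pi) simp
  moreover have "complex_of_real (2 * real_of_int k * pi) * \<i> = 2 * complex_of_real pi * \<i> * of_int k"
    by (simp add: mult_ac)
  ultimately show ?thesis by (simp only:)
qed

lemma exp_i_two_pi: "exp (\<i> * (2 * complex_of_real pi)) = 1"
  by (metis exp_two_pi_i' mult.commute)

lemma rou_mult: "n > 0 \<Longrightarrow> rou n (int n * k) = 1"
proof -
  assume n: "n > 0"
  have "2 * complex_of_real pi * \<i> * of_int (int n * k) / of_nat n = 2 * complex_of_real pi * \<i> * of_int k"
    using n by (simp add: field_simps)
  thus ?thesis unfolding rou_def by (simp only: exp_2pi_int)
qed

lemma rou_add: "n > 0 \<Longrightarrow> rou n (a + b) = rou n a * rou n b"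
  unfolding rou_def by (simp add: add_divide_distrib distrib_left distrib_right exp_add)

lemma rou_mod: "n > 0 \<Longrightarrow> rou n a = rou n (a mod int n)"
proof -
  assume n: "n > 0"
  have "a = a mod int n + int n * (a div int n)" by simp
  hence "rou n a = rou n (a mod int n + int n * (a div int n))" by simp
  also have "\<dots> = rou n (a mod int n)" by (subst rou_add[OF n]) (simp add: rou_mult[OF n])
  finally show ?thesis .
qed

lemma rou_pow: "n > 0 \<Longrightarrow> rou n a ^ n = 1"
proof -
  assume n: "n > 0"
  have "rou n a ^ n = exp (of_nat n * (2 * complex_of_real pi * \<i> * of_int a / of_nat n))"
    unfolding rou_def exp_of_nat_mult ..
  also have "of_nat n * (2 * complex_of_real pi * \<i> * of_int a / of_nat n) = 2 * complex_of_real pi * \<i> * of_int a"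
    using n by (simp add: field_simps)
  finally show ?thesis by (simp only: exp_2pi_int)
qed

lemma loop_root_power:
  assumes "q j > 0"
  shows "loop_root q \<rho> j0 \<theta> \<zeta> j ^ q j = loop_z q \<rho> j0 \<theta> j"
proof -
  have e: "exp (\<i> * complex_of_real (phase j0 \<theta> j / real (q j))) ^ q j = exp (\<i> * complex_of_real (phase j0 \<theta> j))"
  proof -
    have "exp (\<i> * complex_of_real (phase j0 \<theta> j / real (q j))) ^ q j =
        exp (of_nat (q j) * (\<i> * complex_of_real (phase j0 \<theta> j / real (q j))))"
      by (rule exp_of_nat_mult[symmetric])
    also have "of_nat (q j) * (\<i> * complex_of_real (phase j0 \<theta> j / real (q j))) = \<i> * complex_of_real (phase j0 \<theta> j)"
      using assms by (simp add: field_simps)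
    finally show ?thesis .
  qed
  have "loop_root q \<rho> j0 \<theta> \<zeta> j ^ q j = complex_of_real (\<rho> j) ^ q j * exp (\<i> * complex_of_real (phase j0 \<theta> j / real (q j))) ^ q j
     * rou (q j) (\<zeta> j) ^ q j" unfolding loop_root_def by (simp only: power_mult_distrib)
  also have "\<dots> = complex_of_real (\<rho> j ^ q j) * exp (\<i> * complex_of_real (phase j0 \<theta> j))"
    by (simp only: e rou_pow[OF assms] of_real_power mult_1_right)
  finally show ?thesis unfolding loop_z_def .
qed

lemma loop_z_nonzero: "\<forall>j. \<rho> j > 0 \<Longrightarrow> loop_z q \<rho> j0 \<theta> j \<noteq> 0"
proof -
  assume "\<forall>j. \<rho> j > 0"
  hence "\<rho> j \<noteq> 0" by (metis less_irrefl)
  thus ?thesis unfolding loop_z_def by simp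
qed

lemma loop_root_nonzero: "\<forall>j. \<rho> j > 0 \<Longrightarrow> loop_root q \<rho> j0 \<theta> \<zeta> j \<noteq> 0"
proof -
  assume "\<forall>j. \<rho> j > 0"
  hence "\<rho> j \<noteq> 0" by (metis less_irrefl)
  thus ?thesis unfolding loop_root_def rou_def by simp
qed

lemma detS_loop_eig:
  assumes q: "\<forall>j. q j > 0" and \<rho>: "\<forall>j. \<rho> j > 0"
  shows "detS (Wdom q) (\<lambda>a b. Afwd q (loop_z q \<rho> j0 \<theta>) a b - (if a = b then loop_eig q \<rho> j0 \<theta> \<zeta> else 0)) = 0"
proof -
  have h1: "\<forall>j. loop_root q \<rho> j0 \<theta> \<zeta> j \<noteq> 0" using loop_root_nonzero[OF \<rho>] by blast
  have h2: "\<forall>j. loop_root q \<rho> j0 \<theta> \<zeta> j ^ q j = loop_z q \<rho> j0 \<theta> j" using loop_root_power q by blast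
  show ?thesis using detS_Afwd_eigenvalue[OF q h1 h2] unfolding loop_eig_def by simp
qed

lemma loop_z_2pi: "loop_z q \<rho> j0 (2 * pi) = loop_z q \<rho> j0 0"
  unfolding loop_z_def phase_def by (auto simp: fun_eq_iff exp_i_two_pi)

lemma loop_root_2pi:
  assumes q: "\<forall>j. q j > 0"
  shows "loop_root q \<rho> j0 (2 * pi) \<zeta> j = loop_root q \<rho> j0 0 (Wshift q j0 \<zeta>) j"
proof (cases "j = j0")
  case True
  have qp: "q j0 > 0" using q by simp
  have "exp (\<i> * complex_of_real (2 * pi / real (q j0))) * rou (q j0) (\<zeta> j0) = rou (q j0) (\<zeta> j0 + 1)"
  proof -
    have "exp (\<i> * complex_of_real (2 * pi / real (q j0))) = rou (q j0) 1"
      unfolding rou_def by (simp add: field_simps)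
    thus ?thesis using rou_add[OF qp, of "\<zeta> j0" 1] by (simp add: mult.commute)
  qed
  also have "\<dots> = rou (q j0) ((\<zeta> j0 + 1) mod int (q j0))" by (rule rou_mod[OF qp])
  finally show ?thesis using True unfolding loop_root_def phase_def Wshift_def by (simp add: mult.assoc)
next
  case False thus ?thesis unfolding loop_root_def phase_def Wshift_def by simp
qed

lemma loop_eig_2pi:
  assumes q: "\<forall>j. q j > 0"
  shows "loop_eig q \<rho> j0 (2 * pi) \<zeta> = loop_eig q \<rho> j0 0 (Wshift q j0 \<zeta>)"
  unfolding loop_eig_def using loop_root_2pi[OF q] by simp

lemma loop_z_0: "loop_z q \<rho> j0 0 = loop_z q \<rho> j1 0"
  unfolding loop_z_def phase_def by (simp add: fun_eq_iff)

lemma loop_eig_0: "loop_eig q \<rho> j0 0 \<zeta> = loop_eig q \<rho> j1 0 \<zeta>"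
  unfolding loop_eig_def loop_root_def phase_def by simp

lemma continuous_loop_z: "continuous_on UNIV (\<lambda>\<theta>. loop_z q \<rho> j0 \<theta> j)"
  unfolding loop_z_def phase_def by (cases "j = j0") (auto intro!: continuous_intros)

lemma continuous_loop_eig: "continuous_on UNIV (\<lambda>\<theta>. loop_eig q \<rho> j0 \<theta> \<zeta>)"
proof -
  have "continuous_on UNIV (\<lambda>\<theta>. loop_root q \<rho> j0 \<theta> \<zeta> j)" for j
    unfolding loop_root_def phase_def by (cases "j = j0") (auto simp: divide_inverse intro!: continuous_intros)
  thus ?thesis unfolding loop_eig_def by (intro continuous_intros) auto
qed

lemma continuous_lp_eval_loop:
  assumes \<rho>: "\<forall>j. \<rho> j > 0"
  shows "continuous_on UNIV (\<lambda>\<theta>. lp_eval c (loop_z q \<rho> j0 \<theta>) (loop_eig q \<rho> j0 \<theta> \<zeta>))"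
  unfolding lp_eval_def zpow_def
  using loop_z_nonzero[OF \<rho>]
  by (intro continuous_intros continuous_on_power_int continuous_loop_z continuous_loop_eig) auto

lemma geometric_sum_lt_power:
  fixes R \<delta> :: real
  assumes \<delta>: "\<delta> > 0" and R: "R \<ge> 1 + 2 / \<delta>"
  shows "2 * (\<Sum>i<m. R ^ i) < \<delta> * R ^ m"
proof -
  have "R > 1" using R \<delta> by (smt (verit) divide_pos_pos)
  hence "(\<Sum>i<m. R ^ i) \<ge> 0" by (intro sum_nonneg) auto
  moreover have "2 \<le> \<delta> * (R - 1)" using R \<delta> by (simp add: field_simps)
  ultimately have "2 * (\<Sum>i<m. R ^ i) \<le> \<delta> * (R - 1) * (\<Sum>i<m. R ^ i)" by (intro mult_right_mono) auto
  also have "\<dots> = \<delta> * (R ^ m - 1)" using power_diff_1_eq[of R m] by (simp add: mult.assoc)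
  also have "\<dots> < \<delta> * R ^ m" using \<delta> by simp
  finally show ?thesis .
qed

text \<open>The term with the largest exponent outweighs all the others together.\<close>
lemma dominant_power_sum_nonzero:
  fixes c :: "'d::finite \<Rightarrow> complex" and idx :: "'d \<Rightarrow> nat"
  assumes idx: "inj idx" and \<delta>: "\<delta> > 0" and R: "R \<ge> 1 + 2 / \<delta>"
    and c: "\<forall>j. c j = 0 \<or> (\<delta> \<le> norm (c j) \<and> norm (c j) \<le> 2)" and nz: "c js \<noteq> 0"
  shows "(\<Sum>j\<in>UNIV. complex_of_real (R ^ idx j) * c j) \<noteq> 0"
proof
  define J where "J = {j. c j \<noteq> 0}"
  have "idx ` J \<noteq> {}" using nz unfolding J_def by blast
  hence "Max (idx ` J) \<in> idx ` J" by (intro Max_in) simp_all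
  then obtain jm where jm: "jm \<in> J" "idx jm = Max (idx ` J)" by (metis imageE)
  have lt: "idx j < idx jm" if "j \<in> J" "j \<noteq> jm" for j
  proof -
    have "idx j \<le> idx jm" unfolding jm(2) using that(1) by (intro Max_ge) simp_all
    moreover have "idx j \<noteq> idx jm" using injD[OF idx] that(2) by blast
    ultimately show ?thesis by simp
  qed
  have R1: "R > 1" using R \<delta> by (smt (verit) divide_pos_pos)
  have norm_term: "norm (complex_of_real (R ^ idx j) * c j) = R ^ idx j * norm (c j)" for j
    by (simp only: norm_mult norm_of_real) (use R1 in simp)
  have "norm (\<Sum>j\<in>UNIV - {jm}. complex_of_real (R ^ idx j) * c j) \<le> (\<Sum>j\<in>J - {jm}. 2 * R ^ idx j)"
  proof -
    have "norm (\<Sum>j\<in>UNIV - {jm}. complex_of_real (R ^ idx j) * c j) \<le>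
        (\<Sum>j\<in>UNIV - {jm}. norm (complex_of_real (R ^ idx j) * c j))"
      by (rule norm_sum)
    also have "\<dots> = (\<Sum>j\<in>J - {jm}. norm (complex_of_real (R ^ idx j) * c j))"
      by (rule sum.mono_neutral_right) (auto simp: J_def)
    also have "\<dots> \<le> (\<Sum>j\<in>J - {jm}. 2 * R ^ idx j)"
    proof (intro sum_mono)
      fix j assume "j \<in> J - {jm}"
      hence "norm (c j) \<le> 2" using c unfolding J_def by auto
      thus "norm (complex_of_real (R ^ idx j) * c j) \<le> 2 * R ^ idx j"
        using mult_left_mono[of "norm (c j)" 2 "R ^ idx j"] R1 unfolding norm_term by (simp add: mult.commute)
    qed
    finally show ?thesis .
  qed
  also have "\<dots> = 2 * (\<Sum>i\<in>idx ` (J - {jm}). R ^ i)"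
    by (simp add: sum_distrib_left sum.reindex[OF inj_on_subset[OF idx]])
  also have "\<dots> \<le> 2 * (\<Sum>i<idx jm. R ^ i)"
    using sum_mono2[of "{..<idx jm}" "idx ` (J - {jm})" "\<lambda>i. R ^ i"] lt R1 by fastforce
  also have "\<dots> < \<delta> * R ^ idx jm" by (rule geometric_sum_lt_power[OF \<delta> R])
  also have "\<dots> \<le> norm (complex_of_real (R ^ idx jm) * c jm)"
    using mult_left_mono[of \<delta> "norm (c jm)" "R ^ idx jm"] c jm(1) R1 unfolding norm_term J_def
    by (force simp: mult.commute)
  finally have lt_norm: "norm (\<Sum>j\<in>UNIV - {jm}. complex_of_real (R ^ idx j) * c j) <
      norm (complex_of_real (R ^ idx jm) * c jm)" .
  assume "(\<Sum>j\<in>UNIV. complex_of_real (R ^ idx j) * c j) = 0"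
  hence "complex_of_real (R ^ idx jm) * c jm = - (\<Sum>j\<in>UNIV - {jm}. complex_of_real (R ^ idx j) * c j)"
    by (simp add: sum.remove[of UNIV jm] eq_neg_iff_add_eq_0)
  thus False using lt_norm by simp
qed

lemma norm_rou: "norm (rou n a) = 1"
  unfolding rou_def by (simp add: norm_exp_eq_Re)

lemma rou_inj:
  assumes n: "n > 0" and a: "0 \<le> a" "a < int n" and b: "0 \<le> b" "b < int n" and e: "rou n a = rou n b"
  shows "a = b"
proof -
  have "rou n a = exp (2 * complex_of_real pi * \<i> * of_nat (nat a) / of_nat n)" unfolding rou_def using a by simp
  moreover have "rou n b = exp (2 * complex_of_real pi * \<i> * of_nat (nat b) / of_nat n)" unfolding rou_def using b by simp
  ultimately have "nat a mod n = nat b mod n" using e complex_root_unity_eq[of n "nat a" "nat b"] n by simp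
  thus ?thesis using a b by (simp add: nat_less_iff)
qed

definition root_gap :: "('d::finite \<Rightarrow> nat) \<Rightarrow> real" where
  "root_gap q = Min (insert 1 ((\<lambda>(j, a, b). norm (rou (q j) a - rou (q j) b)) `
      {(j, a, b) \<in> (SIGMA j:UNIV. {0..<int (q j)} \<times> {0..<int (q j)}). a \<noteq> b}))"

lemma finite_root_pairs:
  "finite {(j, a, b) \<in> (SIGMA j:(UNIV::'d::finite set). {0..<int (q j)} \<times> {0..<int (q j)}). a \<noteq> b}"
  by (rule finite_subset[where B = "SIGMA j:UNIV. {0..<int (q j)} \<times> {0..<int (q j)}"]) auto

lemma root_gap_pos:
  assumes q: "\<forall>j. q j > 0"
  shows "root_gap q > 0"
proof -
  have "rou (q j) a \<noteq> rou (q j) b" if "a \<in> {0..<int (q j)}" "b \<in> {0..<int (q j)}" "a \<noteq> b" for j a b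
    using rou_inj[of "q j" a b] q that by auto
  thus ?thesis unfolding root_gap_def using finite_root_pairs[of q] by (subst Min_gr_iff) auto
qed

lemma root_gap_le:
  assumes "a \<in> {0..<int (q j)}" "b \<in> {0..<int (q j)}" "a \<noteq> b"
  shows "root_gap q \<le> norm (rou (q j) a - rou (q j) b)"
  unfolding root_gap_def using finite_root_pairs[of q] assms by (intro Min_le) force+

lemma inj_on_loop_eig:
  assumes q: "\<forall>j. q j > 0" and idx: "inj idx" and R: "R \<ge> 1 + 2 / root_gap q"
  shows "inj_on (loop_eig q (\<lambda>j. R ^ idx j) j0 \<theta>) (Wdom q)"
proof (rule inj_onI, rule ccontr)
  fix \<zeta> \<zeta>' assume z: "\<zeta> \<in> Wdom q" "\<zeta>' \<in> Wdom q" and ne: "\<zeta> \<noteq> \<zeta>'"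
    and eq: "loop_eig q (\<lambda>j. R ^ idx j) j0 \<theta> \<zeta> = loop_eig q (\<lambda>j. R ^ idx j) j0 \<theta> \<zeta>'"
  define e where "e j = exp (\<i> * complex_of_real (phase j0 \<theta> j / real (q j)))" for j
  define c where "c j = e j * (rou (q j) (\<zeta> j) - rou (q j) (\<zeta>' j))" for j
  have r: "\<zeta> j \<in> {0..<int (q j)}" "\<zeta>' j \<in> {0..<int (q j)}" for j using z unfolding Wdom_def by auto
  have norm_c: "norm (c j) = norm (rou (q j) (\<zeta> j) - rou (q j) (\<zeta>' j))" for j
    unfolding c_def e_def by (simp add: norm_mult)
  have le2: "norm (rou (q j) (\<zeta> j) - rou (q j) (\<zeta>' j)) \<le> 2" for j
    using norm_triangle_ineq4[of "rou (q j) (\<zeta> j)" "rou (q j) (\<zeta>' j)"] by (simp add: norm_rou)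
  have cb: "\<forall>j. c j = 0 \<or> (root_gap q \<le> norm (c j) \<and> norm (c j) \<le> 2)"
  proof
    fix j
    show "c j = 0 \<or> (root_gap q \<le> norm (c j) \<and> norm (c j) \<le> 2)"
    proof (cases "\<zeta> j = \<zeta>' j")
      case True thus ?thesis unfolding c_def by simp
    next
      case False thus ?thesis using root_gap_le[where q = q and j = j, OF r[of j] False] le2[of j] norm_c[of j] by simp
    qed
  qed
  obtain js where js: "\<zeta> js \<noteq> \<zeta>' js" using ne by (auto simp: fun_eq_iff)
  hence "c js \<noteq> 0" using root_gap_le[where q = q and j = js, OF r[of js] js] root_gap_pos[OF q] norm_c[of js] by fastforce
  hence "(\<Sum>j\<in>UNIV. complex_of_real (R ^ idx j) * c j) \<noteq> 0"
    by (rule dominant_power_sum_nonzero[OF idx root_gap_pos[OF q] R cb])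
  moreover have "(\<Sum>j\<in>UNIV. complex_of_real (R ^ idx j) * c j) =
      (\<Sum>j\<in>UNIV. loop_root q (\<lambda>j. R ^ idx j) j0 \<theta> \<zeta> j) - (\<Sum>j\<in>UNIV. loop_root q (\<lambda>j. R ^ idx j) j0 \<theta> \<zeta>' j)"
    unfolding sum_subtractf[symmetric] loop_root_def c_def e_def by (rule sum.cong) (auto simp: algebra_simps)
  ultimately show False using eq unfolding loop_eig_def by simp
qed


section \<open>Irreducibility of the top part\<close>

lemma continuous_alternative_zero_iff:
  fixes g1 g2 :: "real \<Rightarrow> 'a::real_normed_vector"
  assumes c1: "continuous_on UNIV g1" and c2: "continuous_on UNIV g2"
    and alt: "\<And>\<theta>. \<theta> \<in> {a..b} \<Longrightarrow> g1 \<theta> = 0 \<longleftrightarrow> g2 \<theta> \<noteq> 0" and ab: "a \<le> b"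
  shows "g1 a = 0 \<longleftrightarrow> g1 b = 0"
proof -
  have cl1: "closed {\<theta>. g1 \<theta> = 0}" and cl2: "closed {\<theta>. g2 \<theta> = 0}"
    by (intro closed_Collect_eq c1 c2 continuous_on_const)+
  have "{\<theta>. g1 \<theta> = 0} \<inter> {a..b} = {} \<or> {\<theta>. g2 \<theta> = 0} \<inter> {a..b} = {}"
    by (rule connected_closedD[OF connected_Icc _ _ cl1 cl2]) (use alt in auto)
  moreover have "a \<in> {a..b}" "b \<in> {a..b}" using ab by auto
  ultimately show ?thesis using alt by blast
qed

lemma exists_loop_radii:
  assumes q: "\<forall>j. q j > 0"
  shows "\<exists>\<rho>. (\<forall>j. \<rho> j > 0) \<and> (\<forall>j0 \<theta>. inj_on (loop_eig q \<rho> j0 \<theta>) (Wdom q))"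
proof -
  obtain h :: "'a \<Rightarrow> nat" where "bij_betw h UNIV {0..<CARD('a)}"
    using ex_bij_betw_finite_nat[of "UNIV :: 'a set"] by auto
  hence h: "inj h" unfolding bij_betw_def by simp
  define R where "R = 1 + 2 / root_gap q"
  have "R > 0" unfolding R_def using root_gap_pos[OF q] by (simp add: add_pos_pos)
  hence "\<forall>j. R ^ h j > 0" by simp
  moreover have "inj_on (loop_eig q (\<lambda>j. R ^ h j) j0 \<theta>) (Wdom q)" for j0 \<theta>
    by (rule inj_on_loop_eig[OF q h]) (simp add: R_def)
  ultimately show ?thesis by (intro exI[of _ "\<lambda>j. R ^ h j"]) blast
qed

locale forward_det_factorisation =
  fixes q :: "'d::finite \<Rightarrow> nat"
    and T1 T2 :: "('d \<Rightarrow> int) \<times> nat \<Rightarrow> complex" and k1 k2 :: nat and b1 b2 :: "'d \<Rightarrow> int"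
  assumes q_pos: "\<forall>j. q j > 0"
    and lp1: "is_lp T1" and lp2: "is_lp T2"
    and lead1: "lambda_lead_monomial T1 k1 b1" and lead2: "lambda_lead_monomial T2 k2 b2"
    and degree_sum: "k1 + k2 = card (Wdom q)"
    and factor: "\<And>x \<mu>. \<forall>j. x j \<noteq> 0 \<Longrightarrow>
      lp_eval T1 x \<mu> * lp_eval T2 x \<mu> = detS (Wdom q) (\<lambda>a b. Afwd q x a b - (if a = b then \<mu> else 0))"
begin

definition T1_roots :: "('d \<Rightarrow> real) \<Rightarrow> 'd \<Rightarrow> real \<Rightarrow> ('d \<Rightarrow> int) set" where
  "T1_roots \<rho> j0 \<theta> = {\<zeta> \<in> Wdom q. lp_eval T1 (loop_z q \<rho> j0 \<theta>) (loop_eig q \<rho> j0 \<theta> \<zeta>) = 0}"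

lemma factor_vanishes_on_loop:
  assumes \<rho>: "\<forall>j. \<rho> j > 0"
  shows "lp_eval T1 (loop_z q \<rho> j0 \<theta>) (loop_eig q \<rho> j0 \<theta> \<zeta>) = 0 \<or>
         lp_eval T2 (loop_z q \<rho> j0 \<theta>) (loop_eig q \<rho> j0 \<theta> \<zeta>) = 0"
proof -
  have "\<forall>j. loop_z q \<rho> j0 \<theta> j \<noteq> 0" using loop_z_nonzero[OF \<rho>] by blast
  from factor[OF this, of "loop_eig q \<rho> j0 \<theta> \<zeta>"] show ?thesis
    using detS_loop_eig[OF q_pos \<rho>, of j0 \<theta> \<zeta>] by simp
qed

lemma roots_on_loop:
  assumes \<rho>: "\<forall>j. \<rho> j > 0" and inj: "inj_on (loop_eig q \<rho> j0 \<theta>) (Wdom q)"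
  shows "\<forall>\<zeta>\<in>Wdom q. \<not> (lp_eval T1 (loop_z q \<rho> j0 \<theta>) (loop_eig q \<rho> j0 \<theta> \<zeta>) = 0 \<and>
                         lp_eval T2 (loop_z q \<rho> j0 \<theta>) (loop_eig q \<rho> j0 \<theta> \<zeta>) = 0)"
    and "card (T1_roots \<rho> j0 \<theta>) = k1"
proof -
  have x: "\<forall>j. loop_z q \<rho> j0 \<theta> j \<noteq> 0" using loop_z_nonzero[OF \<rho>] by blast
  note r1 = card_lp_roots_le[OF lp1 lead1 x] and r2 = card_lp_roots_le[OF lp2 lead2 x]
  note split = roots_partition[OF finite_Wdom inj _ r1 r2 degree_sum[symmetric]]
  show "\<forall>\<zeta>\<in>Wdom q. \<not> (lp_eval T1 (loop_z q \<rho> j0 \<theta>) (loop_eig q \<rho> j0 \<theta> \<zeta>) = 0 \<and>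
                         lp_eval T2 (loop_z q \<rho> j0 \<theta>) (loop_eig q \<rho> j0 \<theta> \<zeta>) = 0)"
    and "card (T1_roots \<rho> j0 \<theta>) = k1"
    using split factor_vanishes_on_loop[OF \<rho>] unfolding T1_roots_def by auto
qed

lemma T1_roots_0: "T1_roots \<rho> j0 0 = T1_roots \<rho> j1 0"
  unfolding T1_roots_def loop_z_0[of q \<rho> j0 j1] loop_eig_0[of q \<rho> j0 _ j1] ..

lemma Wshift_T1_roots:
  assumes \<rho>: "\<forall>j. \<rho> j > 0" and inj: "\<forall>j0 \<theta>. inj_on (loop_eig q \<rho> j0 \<theta>) (Wdom q)"
    and \<zeta>: "\<zeta> \<in> T1_roots \<rho> j 0"
  shows "Wshift q j \<zeta> \<in> T1_roots \<rho> j 0"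
proof -
  have \<zeta>W: "\<zeta> \<in> Wdom q" using \<zeta> unfolding T1_roots_def by simp
  define g1 where "g1 \<theta> = lp_eval T1 (loop_z q \<rho> j \<theta>) (loop_eig q \<rho> j \<theta> \<zeta>)" for \<theta>
  define g2 where "g2 \<theta> = lp_eval T2 (loop_z q \<rho> j \<theta>) (loop_eig q \<rho> j \<theta> \<zeta>)" for \<theta>
  have "g1 0 = 0 \<longleftrightarrow> g1 (2 * pi) = 0"
  proof (rule continuous_alternative_zero_iff)
    show "continuous_on UNIV g1" "continuous_on UNIV g2"
      unfolding g1_def g2_def by (intro continuous_lp_eval_loop[OF \<rho>])+
    show "g1 \<theta> = 0 \<longleftrightarrow> g2 \<theta> \<noteq> 0" for \<theta>
      using roots_on_loop(1)[OF \<rho> inj[rule_format]] factor_vanishes_on_loop[OF \<rho>] \<zeta>W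
      unfolding g1_def g2_def by blast
  qed simp
  moreover have "g1 0 = 0" using \<zeta> unfolding g1_def T1_roots_def by simp
  moreover have "g1 (2 * pi) = lp_eval T1 (loop_z q \<rho> j 0) (loop_eig q \<rho> j 0 (Wshift q j \<zeta>))"
    unfolding g1_def loop_z_2pi loop_eig_2pi[OF q_pos] ..
  ultimately show ?thesis using Wshift_in_Wdom[OF q_pos \<zeta>W] unfolding T1_roots_def by simp
qed

lemma lambda_degree_trivial: "k1 = 0 \<or> k2 = 0"
proof (rule ccontr)
  assume "\<not> (k1 = 0 \<or> k2 = 0)"
  hence k: "k1 > 0" "k2 > 0" by auto
  obtain \<rho> where \<rho>: "\<forall>j. \<rho> j > 0" and inj: "\<forall>j0 \<theta>. inj_on (loop_eig q \<rho> j0 \<theta>) (Wdom q)"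
    using exists_loop_radii[OF q_pos] by blast
  fix j0 :: 'd \<comment> \<open>any coordinate will do: at \<open>\<theta> = 0\<close> the loops do not depend on it\<close>
  define S where "S = T1_roots \<rho> j0 0"
  have "card S = k1" unfolding S_def using roots_on_loop(2)[OF \<rho> inj[rule_format]] .
  then obtain \<zeta>0 where "\<zeta>0 \<in> S" using k by (metis card.empty empty_iff less_irrefl subsetI subset_empty)
  moreover have "S \<subseteq> Wdom q" unfolding S_def T1_roots_def by blast
  moreover have "\<forall>j. \<forall>\<zeta>\<in>S. Wshift q j \<zeta> \<in> S"
    unfolding S_def using Wshift_T1_roots[OF \<rho> inj] T1_roots_0 by metis
  ultimately have "S = Wdom q" using Wshift_closed_eq_Wdom[OF q_pos] by blast
  thus False using \<open>card S = k1\<close> degree_sum k by simp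
qed

end

section \<open>Factorisations of the characteristic polynomial\<close>

locale char_factorisation =
  fixes q :: "'d::finite \<Rightarrow> nat" and V :: "('d \<Rightarrow> int) \<Rightarrow> complex"
    and f1 f2 :: "('d \<Rightarrow> int) \<times> nat \<Rightarrow> complex"
  assumes q_pos: "\<forall>j. q j > 0" and lp1: "is_lp f1" and lp2: "is_lp f2"
    and factorisation: "\<forall>z lam. (\<forall>j. z j \<noteq> 0) \<longrightarrow> charP q V z lam = lp_eval f1 z lam * lp_eval f2 z lam"
begin

lemma supp_nonempty: "lp_supp f1 \<noteq> {}" "lp_supp f2 \<noteq> {}"
  using charP_nonzero_somewhere[OF q_pos, of V] factorisation lp_eval_empty_supp by (metis mult_zero_left mult_zero_right)+

lemma tendsto_charP_top_parts:
  assumes x: "\<forall>j. x j \<noteq> 0"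
  shows "((\<lambda>t. charP q V (zcurve w x t) (lcurve L \<mu> t) / complex_of_real t powi (top_weight f1 w L + top_weight f2 w L))
     \<longlongrightarrow> lp_eval (top_part f1 w L) x \<mu> * lp_eval (top_part f2 w L) x \<mu>) at_top"
proof -
  have "((\<lambda>t. lp_eval f1 (zcurve w x t) (lcurve L \<mu> t) / complex_of_real t powi top_weight f1 w L *
        (lp_eval f2 (zcurve w x t) (lcurve L \<mu> t) / complex_of_real t powi top_weight f2 w L))
      \<longlongrightarrow> lp_eval (top_part f1 w L) x \<mu> * lp_eval (top_part f2 w L) x \<mu>) at_top"
    by (rule tendsto_mult[OF tendsto_top_part[OF lp1 supp_nonempty(1)] tendsto_top_part[OF lp2 supp_nonempty(2)]])
  moreover have "eventually (\<lambda>t. lp_eval f1 (zcurve w x t) (lcurve L \<mu> t) / complex_of_real t powi top_weight f1 w L *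
        (lp_eval f2 (zcurve w x t) (lcurve L \<mu> t) / complex_of_real t powi top_weight f2 w L)
     = charP q V (zcurve w x t) (lcurve L \<mu> t) / complex_of_real t powi (top_weight f1 w L + top_weight f2 w L)) at_top"
  proof (rule eventually_mono[OF eventually_gt_at_top[of 0]])
    fix t :: real assume t: "t > 0"
    hence "\<forall>j. zcurve w x t j \<noteq> 0" using x unfolding zcurve_def by simp
    thus "lp_eval f1 (zcurve w x t) (lcurve L \<mu> t) / complex_of_real t powi top_weight f1 w L *
        (lp_eval f2 (zcurve w x t) (lcurve L \<mu> t) / complex_of_real t powi top_weight f2 w L)
     = charP q V (zcurve w x t) (lcurve L \<mu> t) / complex_of_real t powi (top_weight f1 w L + top_weight f2 w L)"
      using factorisation t by (simp add: power_int_add)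
  qed
  ultimately show ?thesis by (rule Lim_transform_eventually)
qed

text \<open>For a weight \<open>w\<close> separating the exponents and \<open>L\<close> large, the top parts are the monomials of
  highest \<open>\<lambda>\<close>-degree and, among those, highest \<open>w\<close>-weight; their product is the top part \<open>(-\<lambda>)\<^sup>Q\<close> of \<open>\<P>\<close>.\<close>
lemma leading_terms:
  assumes winj: "inj_on (wdot w) (fst ` (lp_supp f1 \<union> lp_supp f2))"
  shows "\<exists>s1 s2. s1 \<in> lp_supp f1 \<and> s2 \<in> lp_supp f2 \<and> snd s1 = Max (snd ` lp_supp f1) \<and> snd s2 = Max (snd ` lp_supp f2)
     \<and> (\<forall>a. (a, snd s1) \<in> lp_supp f1 \<longrightarrow> wdot w a \<le> wdot w (fst s1))
     \<and> (\<forall>a. (a, snd s2) \<in> lp_supp f2 \<longrightarrow> wdot w a \<le> wdot w (fst s2))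
     \<and> wdot w (fst s1) + wdot w (fst s2) = 0 \<and> snd s1 + snd s2 = card (Wdom q)
     \<and> (\<forall>x. (\<forall>j. x j \<noteq> 0) \<longrightarrow> f1 s1 * f2 s2 * (zpow x (fst s1) * zpow x (fst s2)) = (-1) ^ card (Wdom q))"
proof -
  define S where "S = lp_supp f1 \<union> lp_supp f2"
  define Q where "Q = card (Wdom q)"
  have finS: "finite S" using lp1 lp2 unfolding S_def is_lp_def lp_supp_def by auto
  define M0 where "M0 = Max (insert 0 ((\<lambda>s. \<bar>wdot w (fst s)\<bar>) ` S))"
  have M0: "\<forall>s\<in>S. \<bar>wdot w (fst s)\<bar> \<le> M0" and "M0 \<ge> 0"
    unfolding M0_def using finS by (auto intro: Max_ge)
  define L where "L = 2 * M0 + 1 + (\<Sum>j\<in>UNIV. \<bar>w j\<bar>)"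
  have "(\<Sum>j\<in>UNIV. \<bar>w j\<bar>) \<ge> 0" by (rule sum_nonneg) auto
  hence L2: "2 * M0 < L" and Lw: "(\<Sum>j\<in>UNIV. \<bar>w j\<bar>) < L" using \<open>M0 \<ge> 0\<close> unfolding L_def by linarith+
  have injS: "inj_on (weight w L) S" by (rule inj_on_weight[OF winj[folded S_def] M0 L2])
  obtain s1 where s1: "s1 \<in> lp_supp f1" "lp_supp (top_part f1 w L) = {s1}" "weight w L s1 = top_weight f1 w L"
      "snd s1 = Max (snd ` lp_supp f1)" "\<forall>a. (a, snd s1) \<in> lp_supp f1 \<longrightarrow> wdot w a \<le> wdot w (fst s1)"
    using top_part_leading_lambda[OF lp1 supp_nonempty(1) inj_on_subset[OF injS] _ L2] M0
    unfolding S_def by blast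
  obtain s2 where s2: "s2 \<in> lp_supp f2" "lp_supp (top_part f2 w L) = {s2}" "weight w L s2 = top_weight f2 w L"
      "snd s2 = Max (snd ` lp_supp f2)" "\<forall>a. (a, snd s2) \<in> lp_supp f2 \<longrightarrow> wdot w a \<le> wdot w (fst s2)"
    using top_part_leading_lambda[OF lp2 supp_nonempty(2) inj_on_subset[OF injS] _ L2] M0
    unfolding S_def by blast
  define E where "E = top_weight f1 w L + top_weight f2 w L"
  have lim: "((\<lambda>t. charP q V (zcurve w x t) (lcurve L 1 t) / complex_of_real t powi E)
      \<longlongrightarrow> f1 s1 * f2 s2 * (zpow x (fst s1) * zpow x (fst s2))) at_top" if "\<forall>j. x j \<noteq> 0" for x
    using tendsto_charP_top_parts[OF that, of w L 1] lp_eval_singleton[OF s1(2)] lp_eval_singleton[OF s2(2)]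
      s1(3) s2(3) unfolding E_def top_part_def by (simp add: ac_simps)
  have limP: "((\<lambda>t. charP q V (zcurve w x t) (lcurve L 1 t) / complex_of_real t powi (L * int Q)) \<longlongrightarrow> (-1) ^ Q) at_top" for x
    using tendsto_charP_lambda_dominant[OF q_pos Lw, of V x 1] unfolding Q_def by simp
  have lim1: "((\<lambda>t. charP q V (zcurve w (\<lambda>_. 1) t) (lcurve L 1 t) / complex_of_real t powi E) \<longlongrightarrow> f1 s1 * f2 s2) at_top"
    using lim[of "\<lambda>_. 1"] by (simp add: zpow_one)
  have "f1 s1 * f2 s2 \<noteq> 0" "(-1::complex) ^ Q \<noteq> 0" using s1(1) s2(1) unfolding lp_supp_def by simp_all
  hence EQ: "E = L * int Q" using power_int_growth_le[OF lim1 limP] power_int_growth_le[OF limP lim1] by simp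
  have rel: "f1 s1 * f2 s2 * (zpow x (fst s1) * zpow x (fst s2)) = (-1) ^ Q" if "\<forall>j. x j \<noteq> 0" for x
    using tendsto_unique[OF trivial_limit_at_top_linorder lim[OF that, unfolded EQ] limP] .
  have "wdot w (fst s1) + wdot w (fst s2) + L * int (snd s1 + snd s2) = L * int Q"
    using s1(3) s2(3) EQ unfolding E_def weight_def by (simp add: algebra_simps)
  from weight_sum_eq_degree[OF this _ _ L2] M0 s1(1) s2(1)
  have "snd s1 + snd s2 = Q" "wdot w (fst s1) + wdot w (fst s2) = 0" unfolding S_def by auto
  thus ?thesis using s1 s2 rel unfolding Q_def by blast
qed

text \<open>Applying \<open>leading_terms\<close> to \<open>w\<close> and to \<open>-w\<close> gives the largest and the smallest \<open>w\<close>-weight on the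
  top \<open>\<lambda>\<close>-slice of each factor; since both pairs sum to \<open>0\<close>, these coincide and each slice is a single
  monomial. Evaluating the product of the two at \<open>x = (1, .., 2, .., 1)\<close> shows \<open>b2 = -b1\<close>.\<close>
lemma leading_lambda_slices:
  "\<exists>k1 k2 b1 b2. k1 + k2 = card (Wdom q) \<and> (\<forall>j. b1 j + b2 j = 0) \<and>
     lambda_lead_monomial f1 k1 b1 \<and> lambda_lead_monomial f2 k2 b2"
proof -
  define A where "A = fst ` (lp_supp f1 \<union> lp_supp f2)"
  have "finite A" using lp1 lp2 unfolding A_def is_lp_def lp_supp_def by auto
  then obtain w :: "'d \<Rightarrow> int" where winj: "inj_on (wdot w) A" using exists_inj_on_wdot by blast
  have winj': "inj_on (wdot (-w)) A" using winj unfolding inj_on_def wdot_neg by simp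
  obtain s1 s2 where
      s1: "s1 \<in> lp_supp f1" "snd s1 = Max (snd ` lp_supp f1)"
        "\<forall>a. (a, snd s1) \<in> lp_supp f1 \<longrightarrow> wdot w a \<le> wdot w (fst s1)"
      and s2: "s2 \<in> lp_supp f2" "snd s2 = Max (snd ` lp_supp f2)"
        "\<forall>a. (a, snd s2) \<in> lp_supp f2 \<longrightarrow> wdot w a \<le> wdot w (fst s2)"
      and sum0: "wdot w (fst s1) + wdot w (fst s2) = 0" and kk: "snd s1 + snd s2 = card (Wdom q)"
      and rel: "\<forall>x. (\<forall>j. x j \<noteq> 0) \<longrightarrow> f1 s1 * f2 s2 * (zpow x (fst s1) * zpow x (fst s2)) = (-1) ^ card (Wdom q)"
    using leading_terms[OF winj[unfolded A_def]] by blast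
  obtain s1' s2' where
      s1': "snd s1' = Max (snd ` lp_supp f1)" "\<forall>a. (a, snd s1') \<in> lp_supp f1 \<longrightarrow> wdot w (fst s1') \<le> wdot w a"
      and s2': "snd s2' = Max (snd ` lp_supp f2)" "\<forall>a. (a, snd s2') \<in> lp_supp f2 \<longrightarrow> wdot w (fst s2') \<le> wdot w a"
      and sum0': "wdot w (fst s1') + wdot w (fst s2') = 0"
    using leading_terms[OF winj'[unfolded A_def]] by (auto simp: wdot_neg)
  have "(fst s1, snd s1') \<in> lp_supp f1" "(fst s2, snd s2') \<in> lp_supp f2"
    using s1(1) s2(1) s1'(1) s2'(1) s1(2)[symmetric] s2(2)[symmetric] by simp_all
  hence "wdot w (fst s1') \<le> wdot w (fst s1)" "wdot w (fst s2') \<le> wdot w (fst s2)"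
    using s1'(2) s2'(2) by blast+
  hence "wdot w (fst s1') = wdot w (fst s1)" "wdot w (fst s2') = wdot w (fst s2)"
    using sum0 sum0' by linarith+
  hence slice: "(a, snd s1) \<in> lp_supp f1 \<longleftrightarrow> a = fst s1" "(a, snd s2) \<in> lp_supp f2 \<longleftrightarrow> a = fst s2" for a
    using s1 s2 s1' s2' winj unfolding inj_on_def A_def by (smt (verit) UnI1 UnI2 fst_conv image_eqI prod.collapse)+
  have bb: "fst s1 j + fst s2 j = 0" for j
  proof -
    have "f1 s1 * f2 s2 = (-1) ^ card (Wdom q)" using rel[rule_format, of "\<lambda>_. 1"] by (simp add: zpow_one)
    moreover have "f1 s1 * f2 s2 * (2 powi fst s1 j * 2 powi fst s2 j) = (-1) ^ card (Wdom q)"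
      using rel[rule_format, of "\<lambda>i. if i = j then 2 else 1"] by (simp add: zpow_two_at)
    ultimately have "(2::complex) powi (fst s1 j + fst s2 j) = 1" by (simp add: power_int_add)
    thus ?thesis by (rule two_power_int_eq_1)
  qed
  have "finite (lp_supp f1)" "finite (lp_supp f2)" using lp1 lp2 unfolding is_lp_def lp_supp_def by auto
  hence "lambda_lead_monomial f1 (snd s1) (fst s1)" "lambda_lead_monomial f2 (snd s2) (fst s2)"
    using s1(2) s2(2) slice unfolding lambda_lead_monomial_def by auto
  thus ?thesis using kk bb by blast
qed

lemma top_parts_factor_Afwd:
  assumes kk: "k1 + k2 = card (Wdom q)" and bb: "\<forall>j. b1 j + b2 j = 0"
    and lead1: "lambda_lead_monomial f1 k1 b1" and lead2: "lambda_lead_monomial f2 k2 b2"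
  shows "forward_det_factorisation q (top_part f1 (\<lambda>j. int (q j)) 1) (top_part f2 (\<lambda>j. int (q j)) 1) k1 k2 b1 b2"
proof -
  define wq where "wq = (\<lambda>j. int (q j))"
  define E where "E = top_weight f1 wq 1 + top_weight f2 wq 1"
  have sl1: "(b1, k1) \<in> lp_supp f1" and sl2: "(b2, k2) \<in> lp_supp f2"
    using lead1 lead2 unfolding lambda_lead_monomial_def by blast+
  have wsum: "weight wq 1 (b1, k1) + weight wq 1 (b2, k2) = int (card (Wdom q))"
  proof -
    have "wdot wq b1 + wdot wq b2 = (\<Sum>j\<in>UNIV. wq j * (b1 j + b2 j))"
      unfolding wdot_def by (simp add: sum.distrib algebra_simps)
    thus ?thesis using bb kk unfolding weight_def by simp
  qed
  have lim: "((\<lambda>t. charP q V (zcurve wq x t) (lcurve 1 \<mu> t) / complex_of_real t powi E)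
      \<longlongrightarrow> lp_eval (top_part f1 wq 1) x \<mu> * lp_eval (top_part f2 wq 1) x \<mu>) at_top" if "\<forall>j. x j \<noteq> 0" for x \<mu>
    using tendsto_charP_top_parts[OF that] unfolding E_def .
  have limT: "((\<lambda>t. charP q V (zcurve wq x t) (lcurve 1 \<mu> t) / complex_of_real t powi int (card (Wdom q)))
      \<longlongrightarrow> detS (Wdom q) (\<lambda>a b. Afwd q x a b - (if a = b then \<mu> else 0))) at_top" for x \<mu>
    using tendsto_charP_forward[OF q_pos, of V x \<mu>] unfolding wq_def by simp
  obtain x0 \<mu>0 where x0: "\<forall>j. x0 j \<noteq> 0"
    and "lp_eval (top_part f1 wq 1) x0 \<mu>0 \<noteq> 0" "lp_eval (top_part f2 wq 1) x0 \<mu>0 \<noteq> 0"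
    using common_nonzero_point[OF is_lp_top_part[OF lp1] is_lp_top_part[OF lp2]
        top_part_nonempty[OF lp1 supp_nonempty(1)] top_part_nonempty[OF lp2 supp_nonempty(2)]] by blast
  hence "E \<le> int (card (Wdom q))" using power_int_growth_le[OF lim[OF x0] limT] by simp
  moreover have "weight wq 1 (b1, k1) \<le> top_weight f1 wq 1" "weight wq 1 (b2, k2) \<le> top_weight f2 wq 1"
    using weight_le_top_weight[OF lp1 sl1] weight_le_top_weight[OF lp2 sl2] .
  ultimately have e1: "top_weight f1 wq 1 = weight wq 1 (b1, k1)" and e2: "top_weight f2 wq 1 = weight wq 1 (b2, k2)"
    and E: "E = int (card (Wdom q))" using wsum unfolding E_def by linarith+
  show ?thesis
  proof (unfold_locales, fold wq_def)
    show "\<forall>j. q j > 0" "k1 + k2 = card (Wdom q)" by (fact q_pos kk)+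
    show "is_lp (top_part f1 wq 1)" "is_lp (top_part f2 wq 1)" by (fact is_lp_top_part[OF lp1] is_lp_top_part[OF lp2])+
    have "top_part f1 wq 1 (b1, k1) = f1 (b1, k1)" "top_part f2 wq 1 (b2, k2) = f2 (b2, k2)"
      using e1 e2 unfolding top_part_def by simp_all
    thus "lambda_lead_monomial (top_part f1 wq 1) k1 b1" "lambda_lead_monomial (top_part f2 wq 1) k2 b2"
      using lambda_lead_monomial_top_part[OF lead1] lambda_lead_monomial_top_part[OF lead2] by blast+
    show "lp_eval (top_part f1 wq 1) x \<mu> * lp_eval (top_part f2 wq 1) x \<mu> =
        detS (Wdom q) (\<lambda>a b. Afwd q x a b - (if a = b then \<mu> else 0))" if "\<forall>j. x j \<noteq> 0" for x \<mu>
      using tendsto_unique[OF trivial_limit_at_top_linorder lim[OF that, unfolded E] limT] .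
  qed
qed

lemma monomial_factor: "is_monomial f1 \<or> is_monomial f2"
proof -
  obtain k1 k2 b1 b2 where kk: "k1 + k2 = card (Wdom q)" and bb: "\<forall>j. b1 j + b2 j = 0"
    and lead1: "lambda_lead_monomial f1 k1 b1" and lead2: "lambda_lead_monomial f2 k2 b2"
    using leading_lambda_slices by blast
  interpret T: forward_det_factorisation q "top_part f1 (\<lambda>j. int (q j)) 1" "top_part f2 (\<lambda>j. int (q j)) 1" k1 k2 b1 b2
    by (rule top_parts_factor_Afwd[OF kk bb lead1 lead2])
  show ?thesis using T.lambda_degree_trivial is_monomial_if_lambda_lead_0 lead1 lead2 by blast
qed

end

theorem mainTheorem6:
  fixes q :: "'d::finite \<Rightarrow> nat" and V :: "('d \<Rightarrow> int) \<Rightarrow> complex"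
  assumes "CARD('d) \<ge> 2"
    and "\<forall>j. q j > 0"
    and "Gcd (range q) = 1"
    and "\<forall>n j. V (n(j := n j + int (q j))) = V n"
  shows "\<not> (\<exists>f1 f2. is_lp f1 \<and> is_lp f2 \<and> \<not> is_monomial f1 \<and> \<not> is_monomial f2 \<and>
            (\<forall>z lam. (\<forall>j. z j \<noteq> 0) \<longrightarrow> charP q V z lam = lp_eval f1 z lam * lp_eval f2 z lam))"
proof
  assume "\<exists>f1 f2. is_lp f1 \<and> is_lp f2 \<and> \<not> is_monomial f1 \<and> \<not> is_monomial f2 \<and>
            (\<forall>z lam. (\<forall>j. z j \<noteq> 0) \<longrightarrow> charP q V z lam = lp_eval f1 z lam * lp_eval f2 z lam)"
  then obtain f1 f2 where "is_lp f1" "is_lp f2" and nm: "\<not> is_monomial f1" "\<not> is_monomial f2"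
    and "\<forall>z lam. (\<forall>j. z j \<noteq> 0) \<longrightarrow> charP q V z lam = lp_eval f1 z lam * lp_eval f2 z lam" by blast
  then interpret char_factorisation q V f1 f2 using assms(2) by unfold_locales
  show False using monomial_factor nm by blast
qed

end
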